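(* Let $f$ satisfy the standing assumptions below. For $t>0$ and $\xi,v\in(0,1)$ set $$\Phi_0(\xi,v)=\frac{1}{2\sqrt2}\int_{-1}^{1}\frac{H'\!\left(\frac{1+\mu}{2}\xi+\frac{1-\mu}{2}v\right)}{\sqrt{1-\mu}}\,d\mu,\qquad H'(u)=-60tu-f'(u).$$ Let $\delta>0$ be such that $\frac{\partial^2}{\partial\xi^2}F_0(\xi,u_1)<0$ for all $0<\xi<1$, $1-\delta<u_1<1$, where $F_0(\xi,u_1)=\frac{1}{2\sqrt2}\int_{-1}^{1}f'(\frac{1+\mu}{2}\xi+\frac{1-\mu}{2}u_1)(1-\mu)^{-1/2}d\mu$, and let $\delta_2>0$ be such that $f''(u)>0$ for $0<u<\delta_2$. Then there exists a constant $T^+>0$ such that for $t>T^+$ the system $$\Phi_0(u_1,u_3)=0,\qquad \int_{u_3}^{u_1}\Phi_0(\xi,u_3)\sqrt{\xi-u_3}\,d\xi=0,\qquad x-30tu_3^2-f(u_3)=0$$ in the unknowns $u_1,u_3\in(0,1)$, $x\in\mathbb{R}$ has a unique solution $u_1^+(t)$, $u_3^+(t)$, $x^+(t)$. The functions $u_1^+(t)$ and $u_3^+(t)$ are increasing and decreasing functions of $t$, respectively, with $$\lim_{t\to+\infty}u_1^+(t)=1,\qquad\lim_{t\to+\infty}u_3^+(t)=0 .$$ Furthermore, $1-\delta<u_1^+(t)<1$ and $0<u_3^+(t)<\delta_2$ for $t>T^+$.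
   Context: Standing assumptions: $f:(0,1)\to\mathbb{R}$ is the inverse of a smooth strictly decreasing function $u_0:\mathbb{R}\to(0,1)$ with $u_0(-\infty)=1$, $u_0(+\infty)=0$; thus $f$ is smooth with $f'<0$, $\lim_{u\to0}f(u)=+\infty$, $\lim_{u\to1}f(u)=-\infty$; moreover $f'''(u)<0$ for $u$ in a neighborhood of $0$ and in a neighborhood of $1$. (Under these assumptions constants $\delta,\delta_2>0$ with the stated properties exist.) *)

theory Defs
  imports "HOL-Analysis.Analysis"
begin

definition smooth_real_on :: "real set \<Rightarrow> (real \<Rightarrow> real) \<Rightarrow> bool" where
  "smooth_real_on S g \<longleftrightarrow> (\<forall>n. \<forall>x\<in>S. (deriv ^^ n) g differentiable (at x))"

definition Hp :: "(real \<Rightarrow> real) \<Rightarrow> real \<Rightarrow> real \<Rightarrow> real" where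
  "Hp f t u = - 60 * t * u - deriv f u"

definition Phi0 :: "(real \<Rightarrow> real) \<Rightarrow> real \<Rightarrow> real \<Rightarrow> real \<Rightarrow> real" where
  "Phi0 f t xi v = 1 / (2 * sqrt 2) *
     integral {-1..1} (\<lambda>mu. Hp f t ((1 + mu) / 2 * xi + (1 - mu) / 2 * v) / sqrt (1 - mu))"

definition F0 :: "(real \<Rightarrow> real) \<Rightarrow> real \<Rightarrow> real \<Rightarrow> real" where
  "F0 f xi u1 = 1 / (2 * sqrt 2) *
     integral {-1..1} (\<lambda>mu. deriv f ((1 + mu) / 2 * xi + (1 - mu) / 2 * u1) / sqrt (1 - mu))"

definition solves_system :: "(real \<Rightarrow> real) \<Rightarrow> real \<Rightarrow> real \<Rightarrow> real \<Rightarrow> real \<Rightarrow> bool" where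
  "solves_system f t u1 u3 x \<longleftrightarrow>
     0 < u3 \<and> u3 < u1 \<and> u1 < 1 \<and>
     Phi0 f t u1 u3 = 0 \<and>
     integral {u3..u1} (\<lambda>xi. Phi0 f t xi u3 * sqrt (xi - u3)) = 0 \<and>
     x - 30 * t * u3\<^sup>2 - f u3 = 0"

end

theory Submission
  imports Defs
begin

text \<open>Substituting \<open>\<mu> = 1 - 2 s\<^sup>2\<close> turns \<open>Phi0 f t \<xi> v\<close> into \<open>Phi t \<xi> v\<close>, the mean of
  \<open>h t p = g p - 60 t p\<close> (with \<open>g = -f' > 0\<close>) over \<open>p = \<xi> - s\<^sup>2 (\<xi> - v)\<close>, \<open>0 \<le> s \<le> 1\<close>, and
  the second equation into \<open>E t u v = 0\<close>, where \<open>E\<close> has \<open>u\<close>-derivative \<open>sqrt (u - v) * Phi t u v\<close>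
  and \<open>v\<close>-derivative \<open>- sqrt (u - v) * h t v\<close>. For large \<open>t\<close> and a suitable \<open>c < 1\<close>, \<open>h t\<close>
  decreases on \<open>(0, c]\<close> and is negative at \<open>c\<close>, while \<open>Phi t \<cdot> v\<close> is strictly convex on \<open>[c, 1)\<close>
  because \<open>-f''' > 0\<close> near 1 and \<open>-f''\<close> is unbounded there. So along a solution \<open>Phi t \<cdot> v\<close> has
  exactly two zeros \<open>y < u\<close> in \<open>(v, 1)\<close>, \<open>E t \<cdot> v\<close> vanishes only at \<open>u\<close>, and \<open>E\<close> decreases in
  \<open>v\<close>: this gives uniqueness. Existence follows from the intermediate value theorem applied, as a
  function of \<open>v\<close>, to the minimum of \<open>E t \<cdot> v\<close> over an interval \<open>[c, b]\<close> with \<open>b < 1\<close>.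
  As \<open>E\<close> decreases in \<open>t\<close>, \<open>u3\<close> decreases. Eliminating \<open>t\<close> from the two equations gives
  \<open>R u v = 0\<close>; \<open>R u v < 0\<close> when \<open>u\<close> stays away from 1 and \<open>f v\<close> is large, which forces
  \<open>u1 \<rightarrow> 1\<close>, and every zero of \<open>R u \<cdot>\<close> below \<open>u3\<close> is an up-crossing, which forces \<open>u1\<close> to
  increase.\<close>

section \<open>Averages along the substituted segment\<close>

text \<open>The substitution \<open>\<mu> = 1 - 2 s\<^sup>2\<close> maps \<open>(1 + \<mu>) / 2 * x + (1 - \<mu>) / 2 * v\<close> to \<open>interp x v s\<close>
  and \<open>d\<mu> / sqrt (1 - \<mu>)\<close> to \<open>- 2 * sqrt 2 * ds\<close> (lemma \<open>integral_sqrt_substitution\<close>).\<close>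

definition interp :: "real \<Rightarrow> real \<Rightarrow> real \<Rightarrow> real" where
  "interp x v s = x - s\<^sup>2 * (x - v)"

lemma interp_eq_convex_comb: "interp x v s = (1 - s\<^sup>2) * x + s\<^sup>2 * v"
  by (simp add: interp_def algebra_simps)

lemma interp_in_unit:
  assumes "0 < x" "x < 1" "0 < v" "v < 1" "0 \<le> s" "s \<le> 1"
  shows "0 < interp x v s" "interp x v s < 1"
proof -
  have s2: "0 \<le> 1 - s\<^sup>2" "0 \<le> s\<^sup>2" using assms by (auto simp: power_le_one)
  show "interp x v s < 1"
    using convex_bound_lt[of x 1 v "1 - s\<^sup>2" "s\<^sup>2"] s2 assms by (simp add: interp_eq_convex_comb)
  show "0 < interp x v s"
    using convex_bound_lt[of "- x" 0 "- v" "1 - s\<^sup>2" "s\<^sup>2"] s2 assms by (simp add: interp_eq_convex_comb)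
qed

lemma interp_between:
  assumes "v \<le> x" "0 \<le> s" "s \<le> 1"
  shows "v \<le> interp x v s" "interp x v s \<le> x"
proof -
  have "s\<^sup>2 * (x - v) \<le> 1 * (x - v)" using assms by (intro mult_right_mono) (auto simp: power_le_one)
  then show "v \<le> interp x v s" by (simp add: interp_def)
  show "interp x v s \<le> x" using assms by (simp add: interp_def)
qed

lemma interp_0 [simp]: "interp x v 0 = x" and interp_1 [simp]: "interp x v 1 = v"
  by (simp_all add: interp_def)

lemma interp_has_derivative_s: "((\<lambda>s. interp x v s) has_real_derivative - 2 * s * (x - v)) (at s within S)"
  unfolding interp_def by (auto intro!: derivative_eq_intros)

lemma interp_has_derivative_x: "((\<lambda>x. interp x v s) has_real_derivative 1 - s\<^sup>2) (at x within S)"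
  unfolding interp_def by (auto intro!: derivative_eq_intros)

lemma interp_has_derivative_v: "((\<lambda>v. interp x v s) has_real_derivative s\<^sup>2) (at v within S)"
  unfolding interp_def by (auto intro!: derivative_eq_intros)

lemma continuous_on_interp [continuous_intros]:
  "continuous_on S X \<Longrightarrow> continuous_on S V \<Longrightarrow> continuous_on S Sv \<Longrightarrow>
    continuous_on S (\<lambda>z. interp (X z) (V z) (Sv z))"
  unfolding interp_def by (intro continuous_intros)

lemma interp_has_integral: "((\<lambda>s. interp x v s) has_integral (2 * x + v) / 3) {0..1}"
proof -
  have "((\<lambda>s. interp x v s) has_integral
      (\<lambda>s. x * s - (x - v) * s ^ 3 / 3) 1 - (\<lambda>s. x * s - (x - v) * s ^ 3 / 3) 0) {0..1}"
    by (rule fundamental_theorem_of_calculus)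
       (auto intro!: derivative_eq_intros
         simp: has_real_derivative_iff_has_vector_derivative[symmetric] interp_def power2_eq_square)
  then show ?thesis by (simp add: field_simps)
qed

lemma continuous_on_weighted_interp_param:
  fixes q wgt :: "real \<Rightarrow> real" and X V :: "'a::topological_space \<Rightarrow> real"
  assumes q: "continuous_on {0<..<1} q" and w: "continuous_on {0..1} wgt"
    and X: "continuous_on S X" "\<And>z. z \<in> S \<Longrightarrow> X z \<in> {0<..<1}"
    and V: "continuous_on S V" "\<And>z. z \<in> S \<Longrightarrow> V z \<in> {0<..<1}"
  shows "continuous_on (S \<times> {0..1}) (\<lambda>(z, s). wgt s * q (interp (X z) (V z) s))"
proof -
  have "continuous_on (S \<times> {0..1}) (\<lambda>p. X (fst p))" "continuous_on (S \<times> {0..1}) (\<lambda>p. V (fst p))"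
    by (auto intro!: continuous_on_compose2[OF X(1)] continuous_on_compose2[OF V(1)] continuous_intros)
  then have qc: "continuous_on (S \<times> {0..1}) (\<lambda>p. q (interp (X (fst p)) (V (fst p)) (snd p)))"
    using X(2) V(2) interp_in_unit
    by (intro continuous_on_compose2[OF q]) (auto intro!: continuous_intros)
  have "continuous_on (S \<times> {0..1}) (\<lambda>p. wgt (snd p))"
    by (rule continuous_on_compose2[OF w]) (auto intro!: continuous_intros)
  from continuous_on_mult[OF this qc] show ?thesis by (simp add: case_prod_beta)
qed

lemma continuous_on_weighted_interp:
  fixes q wgt :: "real \<Rightarrow> real"
  assumes "continuous_on {0<..<1} q" "continuous_on {0..1} wgt" "0 < x" "x < 1" "0 < v" "v < 1"
  shows "continuous_on {0..1} (\<lambda>s. wgt s * q (interp x v s))"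
  using assms interp_in_unit[of x v]
  by (intro continuous_intros continuous_on_compose2[OF assms(1)]) auto

definition weighted_int :: "(real \<Rightarrow> real) \<Rightarrow> (real \<Rightarrow> real) \<Rightarrow> real \<Rightarrow> real \<Rightarrow> real" where
  "weighted_int wgt q x v = integral {0..1} (\<lambda>s. wgt s * q (interp x v s))"

lemma weighted_interp_integrable_on:
  fixes q wgt :: "real \<Rightarrow> real"
  assumes "continuous_on {0<..<1} q" "continuous_on {0..1} wgt"
    "0 < x" "x < 1" "0 < v" "v < 1" "0 \<le> a" "b \<le> 1"
  shows "(\<lambda>s. wgt s * q (interp x v s)) integrable_on {a..b}"
  using assms
  by (intro integrable_continuous_real continuous_on_subset[OF continuous_on_weighted_interp]) auto

lemma weighted_int_add:
  fixes q w1 w2 :: "real \<Rightarrow> real"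
  assumes "continuous_on {0<..<1} q" "continuous_on {0..1} w1" "continuous_on {0..1} w2"
    "0 < x" "x < 1" "0 < v" "v < 1"
  shows "weighted_int (\<lambda>s. w1 s + w2 s) q x v = weighted_int w1 q x v + weighted_int w2 q x v"
  unfolding weighted_int_def distrib_right
  using assms by (intro integral_add weighted_interp_integrable_on) auto

lemma weighted_int_cmult: "weighted_int (\<lambda>s. c * w s) q x v = c * weighted_int w q x v"
  unfolding weighted_int_def by (simp add: mult.assoc)

lemma weighted_int_cong:
  "(\<And>s. 0 \<le> s \<Longrightarrow> s \<le> 1 \<Longrightarrow> w1 s = w2 s) \<Longrightarrow> weighted_int w1 q x v = weighted_int w2 q x v"
  unfolding weighted_int_def by (rule integral_cong) auto

lemma weighted_int_diag: "weighted_int (\<lambda>s. 1) q x x = q x"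
  unfolding weighted_int_def interp_def by simp

lemma weighted_int_has_derivative_x:
  fixes q wgt :: "real \<Rightarrow> real"
  assumes q: "continuous_on {0<..<1} q" and q': "continuous_on {0<..<1} q'"
    and der: "\<And>y. 0 < y \<Longrightarrow> y < 1 \<Longrightarrow> (q has_real_derivative q' y) (at y)"
    and w: "continuous_on {0..1} wgt" and x: "0 < x" "x < 1" and v: "0 < v" "v < 1"
  shows "((\<lambda>x. weighted_int wgt q x v) has_real_derivative
          weighted_int (\<lambda>s. wgt s * (1 - s\<^sup>2)) q' x v) (at x)"
proof -
  have "((\<lambda>x. integral (cbox 0 1) (\<lambda>s. wgt s * q (interp x v s))) has_real_derivative
          integral (cbox 0 1) (\<lambda>s. (wgt s * (1 - s\<^sup>2)) * q' (interp x v s))) (at x within {0<..<1})"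
  proof (rule leibniz_rule_field_derivative)
    fix y s :: real assume y: "y \<in> {0<..<1}" and s: "s \<in> cbox 0 1"
    have "0 < interp y v s" "interp y v s < 1" using y s v interp_in_unit[of y v s] by auto
    from DERIV_cmult[OF DERIV_chain2[OF der[OF this] interp_has_derivative_x], of "wgt s"]
    show "((\<lambda>y. wgt s * q (interp y v s)) has_real_derivative
        (wgt s * (1 - s\<^sup>2)) * q' (interp y v s)) (at y within {0<..<1})"
      by (simp add: ac_simps)
  next
    show "(\<lambda>s. wgt s * q (interp y v s)) integrable_on cbox 0 1" if "y \<in> {0<..<1}" for y
      unfolding cbox_interval using that v by (intro weighted_interp_integrable_on q w) auto
    have "continuous_on {0..1} (\<lambda>s. wgt s * (1 - s\<^sup>2))" using w by (intro continuous_intros)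
    from continuous_on_weighted_interp_param[OF q' this, where S="{0<..<1}" and X="\<lambda>x. x" and V="\<lambda>_. v"] v
    show "continuous_on ({0<..<1} \<times> cbox 0 1) (\<lambda>(x, s). (wgt s * (1 - s\<^sup>2)) * q' (interp x v s))"
      unfolding cbox_interval by (auto intro: continuous_intros)
  qed (use x in \<open>auto simp: convex_real_interval\<close>)
  moreover have "at x within {0<..<1} = at x" using x by (intro at_within_open) auto
  ultimately show ?thesis by (simp add: cbox_interval weighted_int_def)
qed

lemma weighted_int_has_derivative_v:
  fixes q wgt :: "real \<Rightarrow> real"
  assumes q: "continuous_on {0<..<1} q" and q': "continuous_on {0<..<1} q'"
    and der: "\<And>y. 0 < y \<Longrightarrow> y < 1 \<Longrightarrow> (q has_real_derivative q' y) (at y)"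
    and w: "continuous_on {0..1} wgt" and x: "0 < x" "x < 1" and v: "0 < v" "v < 1"
  shows "((\<lambda>v. weighted_int wgt q x v) has_real_derivative
          weighted_int (\<lambda>s. wgt s * s\<^sup>2) q' x v) (at v)"
proof -
  have "((\<lambda>v. integral (cbox 0 1) (\<lambda>s. wgt s * q (interp x v s))) has_real_derivative
          integral (cbox 0 1) (\<lambda>s. (wgt s * s\<^sup>2) * q' (interp x v s))) (at v within {0<..<1})"
  proof (rule leibniz_rule_field_derivative)
    fix y s :: real assume y: "y \<in> {0<..<1}" and s: "s \<in> cbox 0 1"
    have "0 < interp x y s" "interp x y s < 1" using y s x interp_in_unit[of x y s] by auto
    from DERIV_cmult[OF DERIV_chain2[OF der[OF this] interp_has_derivative_v], of "wgt s"]
    show "((\<lambda>y. wgt s * q (interp x y s)) has_real_derivative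
        (wgt s * s\<^sup>2) * q' (interp x y s)) (at y within {0<..<1})"
      by (simp add: ac_simps)
  next
    show "(\<lambda>s. wgt s * q (interp x y s)) integrable_on cbox 0 1" if "y \<in> {0<..<1}" for y
      unfolding cbox_interval using that x by (intro weighted_interp_integrable_on q w) auto
    have "continuous_on {0..1} (\<lambda>s. wgt s * s\<^sup>2)" using w by (intro continuous_intros)
    from continuous_on_weighted_interp_param[OF q' this, where S="{0<..<1}" and X="\<lambda>_. x" and V="\<lambda>v. v"] x
    show "continuous_on ({0<..<1} \<times> cbox 0 1) (\<lambda>(v, s). (wgt s * s\<^sup>2) * q' (interp x v s))"
      unfolding cbox_interval by (auto intro: continuous_intros)
  qed (use v in \<open>auto simp: convex_real_interval\<close>)
  moreover have "at v within {0<..<1} = at v" using v by (intro at_within_open) auto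
  ultimately show ?thesis by (simp add: cbox_interval weighted_int_def)
qed

lemma interp_parts_has_integral:
  fixes q q' phi phi' :: "real \<Rightarrow> real"
  assumes qd: "\<And>y. 0 < y \<Longrightarrow> y < 1 \<Longrightarrow> (q has_real_derivative q' y) (at y)"
    and phid: "\<And>s. (phi has_real_derivative phi' s) (at s)"
    and x: "0 < x" "x < 1" and v: "0 < v" "v < 1" and ab: "0 \<le> a" "a \<le> b" "b \<le> 1"
  shows "((\<lambda>s. phi' s * q (interp x v s) - 2 * (x - v) * (phi s * s) * q' (interp x v s)) has_integral
           phi b * q (interp x v b) - phi a * q (interp x v a)) {a..b}"
proof -
  have "((\<lambda>s. phi s * q (interp x v s)) has_real_derivative
          phi' s * q (interp x v s) - 2 * (x - v) * (phi s * s) * q' (interp x v s)) (at s within {a..b})"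
    if s: "s \<in> {a..b}" for s
  proof -
    have "0 < interp x v s" "interp x v s < 1" using s ab x v interp_in_unit[of x v s] by auto
    from DERIV_mult[OF has_field_derivative_at_within[OF phid]
        DERIV_chain2[OF qd[OF this] interp_has_derivative_s]]
    show ?thesis by (simp add: algebra_simps)
  qed
  then show ?thesis using ab
    by (intro fundamental_theorem_of_calculus) (auto simp: has_real_derivative_iff_has_vector_derivative)
qed

lemma integral_s_deriv_interp:
  fixes q q' :: "real \<Rightarrow> real"
  assumes "\<And>y. 0 < y \<Longrightarrow> y < 1 \<Longrightarrow> (q has_real_derivative q' y) (at y)"
    and "0 < x" "x < 1" "0 < v" "v < 1" "x \<noteq> v" "0 \<le> a" "a \<le> b" "b \<le> 1"
  shows "integral {a..b} (\<lambda>s. s * q' (interp x v s))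
    = (q (interp x v a) - q (interp x v b)) / (2 * (x - v))"
proof -
  have "((\<lambda>s. 0 * q (interp x v s) - 2 * (x - v) * (1 * s) * q' (interp x v s)) has_integral
      1 * q (interp x v b) - 1 * q (interp x v a)) {a..b}"
    using assms by (intro interp_parts_has_integral) auto
  from has_integral_mult_right[OF this, of "- 1 / (2 * (x - v))"]
  have "((\<lambda>s. s * q' (interp x v s)) has_integral
      - ((q (interp x v b) - q (interp x v a)) / (2 * (x - v)))) {a..b}"
    using assms(6) by (simp add: divide_simps)
  then show ?thesis by (metis integral_unique minus_diff_eq minus_divide_left)
qed

lemma weighted_int_parts:
  fixes q q' phi phi' :: "real \<Rightarrow> real"
  assumes qd: "\<And>y. 0 < y \<Longrightarrow> y < 1 \<Longrightarrow> (q has_real_derivative q' y) (at y)"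
    and phid: "\<And>s. (phi has_real_derivative phi' s) (at s)"
    and cq: "continuous_on {0<..<1} q" and cq': "continuous_on {0<..<1} q'"
    and c1: "continuous_on {0..1} phi'" and c2: "continuous_on {0..1} (\<lambda>s. phi s * s)"
    and x: "0 < x" "x < 1" and v: "0 < v" "v < 1"
  shows "weighted_int phi' q x v - 2 * (x - v) * weighted_int (\<lambda>s. phi s * s) q' x v
    = phi 1 * q v - phi 0 * q x"
proof -
  have "((\<lambda>s. phi' s * q (interp x v s) - 2 * (x - v) * ((phi s * s) * q' (interp x v s))) has_integral
      phi 1 * q v - phi 0 * q x) {0..1}"
    using interp_parts_has_integral[OF qd phid x v, of 0 1] by (simp add: mult.assoc)
  moreover have "integral {0..1} (\<lambda>s. phi' s * q (interp x v s) - 2 * (x - v) * ((phi s * s) * q' (interp x v s)))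
      = weighted_int phi' q x v - 2 * (x - v) * weighted_int (\<lambda>s. phi s * s) q' x v"
    unfolding weighted_int_def
    using weighted_interp_integrable_on[OF cq c1 x v] weighted_interp_integrable_on[OF cq' c2 x v]
    by (subst integral_diff) (auto intro!: integrable_on_mult_right)
  ultimately show ?thesis by (simp add: integral_unique)
qed

lemma integral_pos_of_pos_on_first_half:
  fixes phi :: "real \<Rightarrow> real"
  assumes c: "continuous_on {0..1} phi" and p: "\<And>s. 0 \<le> s \<Longrightarrow> s \<le> 1/2 \<Longrightarrow> 0 < phi s"
    and nn: "\<And>s. 0 \<le> s \<Longrightarrow> s \<le> 1 \<Longrightarrow> 0 \<le> phi s"
  shows "0 < integral {0..1} phi"
proof -
  have c2: "continuous_on {0..1/2} phi" by (rule continuous_on_subset[OF c]) auto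
  obtain m where m: "m \<in> {0..1/2}" "\<And>s. s \<in> {0..1/2} \<Longrightarrow> phi m \<le> phi s"
    using continuous_attains_inf[OF compact_Icc _ c2] by auto
  have "integral {0..1/2} (\<lambda>s::real. phi m) \<le> integral {0..1/2} phi"
    by (intro integral_le integrable_continuous_real c2) (use m in auto)
  then have 1: "phi m / 2 \<le> integral {0..1/2} phi" by simp
  have 2: "0 \<le> integral {1/2..1} phi"
    by (intro integral_nonneg integrable_continuous_real continuous_on_subset[OF c]) (use nn in auto)
  have "integral {0..1/2} phi + integral {1/2..1} phi = integral {0..1} phi"
    by (rule Henstock_Kurzweil_Integration.integral_combine[OF _ _ integrable_continuous_real[OF c]]) auto
  then show ?thesis using 1 2 m p by force
qed

lemma DERIV_upper_bound_growth:
  fixes F F' :: "real \<Rightarrow> real"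
  assumes "a \<le> y" and "\<And>z. a \<le> z \<Longrightarrow> z \<le> y \<Longrightarrow> (F has_real_derivative F' z) (at z)"
    and "\<And>z. a \<le> z \<Longrightarrow> z \<le> y \<Longrightarrow> F' z \<le> K"
  shows "F y \<le> F a + K * (y - a)"
proof -
  have "F y - K * y \<le> F a - K * a"
  proof (rule DERIV_nonpos_imp_nonincreasing[OF assms(1), of "\<lambda>z. F z - K * z"])
    fix z assume "a \<le> z" "z \<le> y"
    with assms show "\<exists>d. ((\<lambda>z. F z - K * z) has_real_derivative d) (at z) \<and> d \<le> 0"
      by (intro exI[of _ "F' z - K * 1"]) (auto intro!: DERIV_diff DERIV_cmult DERIV_ident)
  qed
  then show ?thesis by (simp add: algebra_simps)
qed

lemma continuous_on_Inf_compact_param: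
  fixes F :: "'a::metric_space \<Rightarrow> 'b::metric_space \<Rightarrow> real"
  assumes K: "compact K" "K \<noteq> {}" and V: "compact V"
    and F: "continuous_on (K \<times> V) (\<lambda>z. F (fst z) (snd z))"
  shows "continuous_on V (\<lambda>v. Inf ((\<lambda>x. F x v) ` K))"
proof -
  have bdd: "bdd_below ((\<lambda>x. F x v) ` K)" if "v \<in> V" for v
  proof -
    have "bounded ((\<lambda>z. F (fst z) (snd z)) ` (K \<times> V))"
      by (intro compact_imp_bounded compact_continuous_image F compact_Times K(1) V)
    moreover have "(\<lambda>x. F x v) ` K \<subseteq> (\<lambda>z. F (fst z) (snd z)) ` (K \<times> V)" using that by force
    ultimately show ?thesis by (meson bdd_below_mono bounded_imp_bdd_below)
  qed
  have Inf_le: "Inf ((\<lambda>x. F x v') ` K) \<le> Inf ((\<lambda>x. F x v) ` K) + e"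
    if "v' \<in> V" "\<And>x. x \<in> K \<Longrightarrow> F x v' \<le> F x v + e" for v v' e
  proof -
    have "Inf ((\<lambda>x. F x v') ` K) - e \<le> F x v" if "x \<in> K" for x
      using cInf_lower[OF imageI[OF that] bdd[OF \<open>v' \<in> V\<close>]] \<open>\<And>x. x \<in> K \<Longrightarrow> F x v' \<le> F x v + e\<close>[OF that]
      by linarith
    then have "Inf ((\<lambda>x. F x v') ` K) - e \<le> Inf ((\<lambda>x. F x v) ` K)"
      using K(2) by (intro cInf_greatest) auto
    then show ?thesis by simp
  qed
  have uc: "uniformly_continuous_on (K \<times> V) (\<lambda>z. F (fst z) (snd z))"
    by (rule compact_uniformly_continuous[OF F compact_Times[OF K(1) V]])
  show ?thesis unfolding continuous_on_iff
  proof (intro ballI allI impI)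
    fix v and e :: real assume v: "v \<in> V" and e: "0 < e"
    obtain d where d: "0 < d" "\<And>z z'. z \<in> K \<times> V \<Longrightarrow> z' \<in> K \<times> V \<Longrightarrow> dist z' z < d \<Longrightarrow>
        dist (F (fst z') (snd z')) (F (fst z) (snd z)) < e / 2"
      using uc e unfolding uniformly_continuous_on_def by (meson half_gt_zero)
    show "\<exists>d>0. \<forall>v'\<in>V. dist v' v < d \<longrightarrow> dist (Inf ((\<lambda>x. F x v') ` K)) (Inf ((\<lambda>x. F x v) ` K)) < e"
    proof (intro exI[of _ d] conjI ballI impI d(1))
      fix v' assume v': "v' \<in> V" "dist v' v < d"
      have close: "\<bar>F x v' - F x v\<bar> < e / 2" if "x \<in> K" for x
        using d(2)[of "(x, v)" "(x, v')"] that v v' by (simp add: dist_Pair_Pair dist_real_def)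
      have "F x v' \<le> F x v + e / 2" "F x v \<le> F x v' + e / 2" if "x \<in> K" for x
        using close[OF that] unfolding abs_less_iff by linarith+
      then have "Inf ((\<lambda>x. F x v') ` K) \<le> Inf ((\<lambda>x. F x v) ` K) + e / 2"
        "Inf ((\<lambda>x. F x v) ` K) \<le> Inf ((\<lambda>x. F x v') ` K) + e / 2"
        using Inf_le[of v' v "e / 2"] Inf_le[of v v' "e / 2"] v v' by auto
      then show "dist (Inf ((\<lambda>x. F x v') ` K)) (Inf ((\<lambda>x. F x v) ` K)) < e"
        using e by (simp add: dist_real_def abs_le_iff)
    qed
  qed
qed

lemma last_zero_before_negative:
  fixes F :: "real \<Rightarrow> real"
  assumes "a < b" "continuous_on {a..b} F" "0 \<le> F a" "F b < 0"
  obtains w where "a \<le> w" "w < b" "F w = 0" "\<And>x. w < x \<Longrightarrow> x \<le> b \<Longrightarrow> F x < 0"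
proof -
  define S where "S = {w \<in> {a..b}. 0 \<le> F w}"
  have "closed S"
    unfolding S_def using continuous_on_closed_Collect_le[OF continuous_on_const assms(2) closed_atLeastAtMost]
    by simp
  moreover have "a \<in> S" "bdd_above S" using assms by (auto simp: S_def bdd_above_def)
  ultimately have "Sup S \<in> S" by (intro closed_contains_Sup) auto
  then have w: "a \<le> Sup S" "Sup S \<le> b" "0 \<le> F (Sup S)" by (auto simp: S_def)
  have above: "F x < 0" if "Sup S < x" "x \<le> b" for x
  proof (rule ccontr)
    assume "\<not> F x < 0"
    then have "x \<in> S" using that w by (auto simp: S_def)
    then show False using cSup_upper[OF _ \<open>bdd_above S\<close>] that by fastforce
  qed
  have wb: "Sup S < b" using w assms(4) by (cases "Sup S = b") auto
  have "F (Sup S) = 0"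
  proof (rule ccontr)
    assume "F (Sup S) \<noteq> 0"
    moreover have "continuous_on {Sup S..b} F" by (rule continuous_on_subset[OF assms(2)]) (use w in auto)
    ultimately obtain z where "Sup S \<le> z" "z \<le> b" "F z = 0"
      using IVT2'[of F b 0 "Sup S"] w wb assms(4) by auto
    then show False using above[of z] w \<open>F (Sup S) \<noteq> 0\<close> by (cases "z = Sup S") auto
  qed
  then show ?thesis using that w wb above by blast
qed

lemma negative_before_upcrossing_zero:
  fixes F :: "real \<Rightarrow> real"
  assumes ab: "a \<le> b" and cF: "continuous_on {a..b} F" and Fb: "F b = 0"
    and up: "\<And>w. a \<le> w \<Longrightarrow> w \<le> b \<Longrightarrow> F w = 0 \<Longrightarrow> \<exists>l>0. (F has_real_derivative l) (at w)"
    and w: "a \<le> w" "w < b"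
  shows "F w < 0"
proof (rule ccontr)
  assume nn: "\<not> F w < 0"
  obtain l where "0 < l" "(F has_real_derivative l) (at b)" using up[of b] ab Fb by auto
  then obtain d where d: "0 < d" "\<And>h. 0 < h \<Longrightarrow> h < d \<Longrightarrow> F (b - h) < F b"
    using DERIV_pos_inc_left by blast
  define h where "h = min (d / 2) ((b - w) / 2)"
  have h: "0 < h" "h < d" "h < b - w" using d(1) w by (auto simp: h_def min_def)
  define b' where "b' = b - h"
  have b': "w < b'" "b' < b" "F b' < 0" using d(2)[OF h(1,2)] h Fb by (auto simp: b'_def)
  have "continuous_on {w..b'} F" by (rule continuous_on_subset[OF cF]) (use w b' in auto)
  then obtain z where z: "w \<le> z" "z < b'" "F z = 0" and neg: "\<And>x. z < x \<Longrightarrow> x \<le> b' \<Longrightarrow> F x < 0"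
    by (rule last_zero_before_negative[OF \<open>w < b'\<close>]) (use nn b' in auto)
  obtain l2 where "0 < l2" "(F has_real_derivative l2) (at z)" using up[of z] z w b' by auto
  then obtain d2 where d2: "0 < d2" "\<And>h. 0 < h \<Longrightarrow> h < d2 \<Longrightarrow> F z < F (z + h)"
    using DERIV_pos_inc_right by blast
  define h2 where "h2 = min (d2 / 2) ((b' - z) / 2)"
  have h2: "0 < h2" "h2 < d2" "h2 < b' - z" using d2(1) z by (auto simp: h2_def min_def)
  have "F z < F (z + h2)" "F (z + h2) < 0" using d2(2)[OF h2(1,2)] neg[of "z + h2"] h2 by auto
  then show False using z by simp
qed

lemma interp_sqrt_substitution:
  assumes "-1 \<le> \<mu>" "\<mu> \<le> 1"
  shows "interp x v (sqrt ((1 - \<mu>) / 2)) = (1 + \<mu>) / 2 * x + (1 - \<mu>) / 2 * v"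
  using assms by (simp add: interp_def field_simps)

lemma integral_sqrt_substitution:
  fixes H :: "real \<Rightarrow> real"
  assumes H: "continuous_on {0<..<1} H" and x: "0 < x" "x < 1" and v: "0 < v" "v < 1"
  shows "integral {-1..1} (\<lambda>\<mu>. H ((1 + \<mu>) / 2 * x + (1 - \<mu>) / 2 * v) / sqrt (1 - \<mu>))
       = 2 * sqrt 2 * integral {0..1} (\<lambda>s. H (interp x v s))"
proof -
  define \<sigma> where "\<sigma> = (\<lambda>\<mu>::real. sqrt ((1 - \<mu>) / 2))"
  define \<sigma>' where "\<sigma>' = (\<lambda>\<mu>::real. - 1 / (2 * sqrt 2 * sqrt (1 - \<mu>)))"
  define K where "K = (\<lambda>s. H (interp x v s))"
  have cK: "continuous_on {0..1} K"
    unfolding K_def using continuous_on_weighted_interp[OF H _ x v, of "\<lambda>s. 1"] by simp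
  have sub: "\<sigma> ` {-1..1} \<subseteq> {0..1}" by (auto simp: \<sigma>_def)
  have c\<sigma>: "continuous_on {-1..1} \<sigma>" unfolding \<sigma>_def by (intro continuous_intros) auto
  have d\<sigma>: "(\<sigma> has_field_derivative \<sigma>' \<mu>) (at \<mu> within {-1..1})" if "\<mu> \<in> {-1..1} - {1}" for \<mu>
  proof -
    have p: "0 < (1 - \<mu>) / 2" using that by auto
    have "(\<sigma> has_real_derivative inverse (sqrt ((1 - \<mu>) / 2)) / 2 * (- 1 / 2)) (at \<mu>)"
      unfolding \<sigma>_def
      by (rule DERIV_chain2[where f=sqrt and g="\<lambda>\<mu>. (1 - \<mu>) / 2", OF DERIV_real_sqrt[OF p]])
         (auto intro!: derivative_eq_intros)
    moreover have "inverse (sqrt ((1 - \<mu>) / 2)) / 2 * (- 1 / 2) = \<sigma>' \<mu>"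
      using p by (simp add: \<sigma>'_def real_sqrt_divide field_simps)
    ultimately show ?thesis by (simp add: has_field_derivative_at_within)
  qed
  have "((\<lambda>\<mu>. \<sigma>' \<mu> *\<^sub>R K (\<sigma> \<mu>)) has_integral
      integral {\<sigma> (-1)..\<sigma> 1} K - integral {\<sigma> 1..\<sigma> (-1)} K) {-1..1}"
    by (rule has_integral_substitution_general[of "{1}"]) (use sub cK c\<sigma> d\<sigma> in auto)
  then have "((\<lambda>\<mu>. \<sigma>' \<mu> * K (\<sigma> \<mu>)) has_integral - integral {0..1} K) {-1..1}"
    by (simp add: \<sigma>_def)
  from has_integral_mult_right[OF this, of "- 2 * sqrt 2"]
  have "((\<lambda>\<mu>. (- 2 * sqrt 2) * (\<sigma>' \<mu> * K (\<sigma> \<mu>))) has_integral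
      2 * sqrt 2 * integral {0..1} K) {-1..1}"
    by simp
  moreover have "(- 2 * sqrt 2) * (\<sigma>' \<mu> * K (\<sigma> \<mu>))
      = H ((1 + \<mu>) / 2 * x + (1 - \<mu>) / 2 * v) / sqrt (1 - \<mu>)" if "\<mu> \<in> {-1..1}" for \<mu>
  proof -
    have "K (\<sigma> \<mu>) = H ((1 + \<mu>) / 2 * x + (1 - \<mu>) / 2 * v)"
      unfolding K_def \<sigma>_def using that by (simp only: interp_sqrt_substitution atLeastAtMost_iff)
    then show ?thesis by (simp add: \<sigma>'_def)
  qed
  ultimately have "((\<lambda>\<mu>. H ((1 + \<mu>) / 2 * x + (1 - \<mu>) / 2 * v) / sqrt (1 - \<mu>)) has_integral
      2 * sqrt 2 * integral {0..1} K) {-1..1}"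
    by (rule has_integral_eq[rotated])
  then show ?thesis by (simp add: K_def integral_unique)
qed

section \<open>Averages of the derivatives of the inverse profile\<close>

text \<open>The parameters \<open>g\<close>, \<open>g1\<close>, \<open>g2\<close> stand for \<open>-f'\<close>, \<open>-f''\<close>, \<open>-f'''\<close>.\<close>

locale inverse_profile =
  fixes f g g1 g2 :: "real \<Rightarrow> real" and e0 d2 :: real
  assumes f_der: "\<And>x. 0 < x \<Longrightarrow> x < 1 \<Longrightarrow> (f has_real_derivative - g x) (at x)"
    and g_der: "\<And>x. 0 < x \<Longrightarrow> x < 1 \<Longrightarrow> (g has_real_derivative g1 x) (at x)"
    and g1_der: "\<And>x. 0 < x \<Longrightarrow> x < 1 \<Longrightarrow> (g1 has_real_derivative g2 x) (at x)"
    and g2_cont: "\<And>x. 0 < x \<Longrightarrow> x < 1 \<Longrightarrow> isCont g2 x"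
    and g_pos: "\<And>x. 0 < x \<Longrightarrow> x < 1 \<Longrightarrow> 0 < g x"
    and e0: "0 < e0" "e0 \<le> 1/4"
    and g2_pos_near_0: "\<And>x. 0 < x \<Longrightarrow> x < e0 \<Longrightarrow> 0 < g2 x"
    and g2_pos_near_1: "\<And>x. 1 - e0 < x \<Longrightarrow> x < 1 \<Longrightarrow> 0 < g2 x"
    and d2: "0 < d2" "d2 < 1"
    and g1_neg_near_0: "\<And>x. 0 < x \<Longrightarrow> x < d2 \<Longrightarrow> g1 x < 0"
    and f_at_0: "\<And>K. \<exists>a>0. \<forall>x. 0 < x \<and> x < a \<longrightarrow> K < f x"
    and f_at_1: "\<And>K. \<exists>b<1. \<forall>x. b < x \<and> x < 1 \<longrightarrow> f x < K"
begin

lemma continuous_on_g: "continuous_on {0<..<1} g"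
  by (intro continuous_at_imp_continuous_on ballI DERIV_isCont[OF g_der]) auto

lemma continuous_on_g1: "continuous_on {0<..<1} g1"
  by (intro continuous_at_imp_continuous_on ballI DERIV_isCont[OF g1_der]) auto

lemma continuous_on_g2: "continuous_on {0<..<1} g2"
  by (intro continuous_at_imp_continuous_on ballI g2_cont) auto

lemma f_strict_antimono: "0 < x \<Longrightarrow> x < y \<Longrightarrow> y < 1 \<Longrightarrow> f y < f x"
  using f_der g_pos by (intro DERIV_neg_imp_decreasing[of x y f]) (force intro!: exI[of _ "- g _"])+

lemma f_antimono: "0 < x \<Longrightarrow> x \<le> y \<Longrightarrow> y < 1 \<Longrightarrow> f y \<le> f x"
  using f_strict_antimono by (cases "x = y") (auto simp: less_imp_le)

definition A :: "real \<Rightarrow> real \<Rightarrow> real" where "A x v = weighted_int (\<lambda>s. 1) g x v"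
definition N :: "real \<Rightarrow> real \<Rightarrow> real" where "N x v = weighted_int (\<lambda>s. s\<^sup>2) g x v"
definition Ax :: "real \<Rightarrow> real \<Rightarrow> real" where "Ax x v = weighted_int (\<lambda>s. 1 - s\<^sup>2) g1 x v"
definition Axx :: "real \<Rightarrow> real \<Rightarrow> real" where "Axx x v = weighted_int (\<lambda>s. (1 - s\<^sup>2)\<^sup>2) g2 x v"

lemma A_has_derivative_x:
  "0 < x \<Longrightarrow> x < 1 \<Longrightarrow> 0 < v \<Longrightarrow> v < 1 \<Longrightarrow> ((\<lambda>x. A x v) has_real_derivative Ax x v) (at x)"
  using weighted_int_has_derivative_x[OF continuous_on_g continuous_on_g1 g_der, of "\<lambda>s. 1"]
  by (simp add: A_def Ax_def)

lemma Ax_has_derivative_x: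
  "0 < x \<Longrightarrow> x < 1 \<Longrightarrow> 0 < v \<Longrightarrow> v < 1 \<Longrightarrow> ((\<lambda>x. Ax x v) has_real_derivative Axx x v) (at x)"
  using weighted_int_has_derivative_x[OF continuous_on_g1 continuous_on_g2 g1_der, of "\<lambda>s. 1 - s\<^sup>2"]
  by (simp add: Ax_def Axx_def power2_eq_square continuous_intros)

lemma A_has_derivative_v:
  assumes "0 < x" "x < 1" "0 < v" "v < 1" "v \<noteq> x"
  shows "((\<lambda>v. A x v) has_real_derivative (A x v - g v) / (2 * (x - v))) (at v)"
proof -
  have d: "((\<lambda>v. A x v) has_real_derivative weighted_int (\<lambda>s. 1 * s\<^sup>2) g1 x v) (at v)"
    unfolding A_def
    by (rule weighted_int_has_derivative_v[OF continuous_on_g continuous_on_g1 g_der _ assms(1-4)])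
       (auto intro!: continuous_intros)
  have "weighted_int (\<lambda>s. 1) g x v - 2 * (x - v) * weighted_int (\<lambda>s. s * s) g1 x v = 1 * g v - 0 * g x"
    by (rule weighted_int_parts[OF g_der _ continuous_on_g continuous_on_g1 _ _ assms(1-4)])
       (auto intro!: derivative_eq_intros continuous_intros)
  then have "weighted_int (\<lambda>s. 1 * s\<^sup>2) g1 x v = (A x v - g v) / (2 * (x - v))"
    using assms(5) by (simp add: A_def power2_eq_square field_simps)
  then show ?thesis by (rule DERIV_cong[OF d])
qed

lemma N_has_derivative_x:
  assumes "0 < x" "x < 1" "0 < v" "v < 1" "v \<noteq> x"
  shows "((\<lambda>x. N x v) has_real_derivative (A x v - 3 * N x v) / (2 * (x - v))) (at x)"
proof -
  have d: "((\<lambda>x. N x v) has_real_derivative weighted_int (\<lambda>s. s\<^sup>2 * (1 - s\<^sup>2)) g1 x v) (at x)"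
    unfolding N_def
    by (rule weighted_int_has_derivative_x[OF continuous_on_g continuous_on_g1 g_der _ assms(1-4)])
       (auto intro!: continuous_intros)
  have "weighted_int (\<lambda>s. 1 - 3 * s\<^sup>2) g x v - 2 * (x - v) * weighted_int (\<lambda>s. (s - s ^ 3) * s) g1 x v
      = (1 - 1 ^ 3) * g v - (0 - 0 ^ 3) * g x"
    by (rule weighted_int_parts[OF g_der _ continuous_on_g continuous_on_g1 _ _ assms(1-4)])
       (auto intro!: derivative_eq_intros continuous_intros simp: power2_eq_square)
  moreover have "weighted_int (\<lambda>s. 1 - 3 * s\<^sup>2) g x v = A x v - 3 * N x v"
    using weighted_int_add[OF continuous_on_g _ _ assms(1-4), of "\<lambda>s. 1" "\<lambda>s. - 3 * s\<^sup>2"]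
      weighted_int_cmult[of "- 3" "\<lambda>s. s\<^sup>2" g x v]
    by (simp add: A_def N_def continuous_intros)
  moreover have "weighted_int (\<lambda>s. (s - s ^ 3) * s) g1 x v = weighted_int (\<lambda>s. s\<^sup>2 * (1 - s\<^sup>2)) g1 x v"
    by (rule weighted_int_cong) (simp add: power2_eq_square power3_eq_cube algebra_simps)
  ultimately have "weighted_int (\<lambda>s. s\<^sup>2 * (1 - s\<^sup>2)) g1 x v = (A x v - 3 * N x v) / (2 * (x - v))"
    using assms(5) by (simp add: field_simps)
  then show ?thesis by (rule DERIV_cong[OF d])
qed

lemma N_has_derivative_v:
  assumes "0 < x" "x < 1" "0 < v" "v < 1" "v \<noteq> x"
  shows "((\<lambda>v. N x v) has_real_derivative (3 * N x v - g v) / (2 * (x - v))) (at v)"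
proof -
  have d: "((\<lambda>v. N x v) has_real_derivative weighted_int (\<lambda>s. s\<^sup>2 * s\<^sup>2) g1 x v) (at v)"
    unfolding N_def
    by (rule weighted_int_has_derivative_v[OF continuous_on_g continuous_on_g1 g_der _ assms(1-4)])
       (auto intro!: continuous_intros)
  have "weighted_int (\<lambda>s. 3 * s\<^sup>2) g x v - 2 * (x - v) * weighted_int (\<lambda>s. s ^ 3 * s) g1 x v
      = 1 ^ 3 * g v - 0 ^ 3 * g x"
    by (rule weighted_int_parts[OF g_der _ continuous_on_g continuous_on_g1 _ _ assms(1-4)])
       (auto intro!: derivative_eq_intros continuous_intros)
  moreover have "weighted_int (\<lambda>s. s ^ 3 * s) g1 x v = weighted_int (\<lambda>s. s\<^sup>2 * s\<^sup>2) g1 x v"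
    by (rule weighted_int_cong) (simp add: power2_eq_square power3_eq_cube)
  ultimately have "weighted_int (\<lambda>s. s\<^sup>2 * s\<^sup>2) g1 x v = (3 * N x v - g v) / (2 * (x - v))"
    using assms(5) by (simp add: N_def weighted_int_cmult field_simps)
  then show ?thesis by (rule DERIV_cong[OF d])
qed

lemma integral_s_g_interp:
  assumes "0 < x" "x < 1" "0 < v" "v < 1" "x \<noteq> v" "0 \<le> a" "a \<le> b" "b \<le> 1"
  shows "integral {a..b} (\<lambda>s. s * g (interp x v s)) = (f (interp x v b) - f (interp x v a)) / (2 * (x - v))"
proof -
  have "((\<lambda>y. - f y) has_real_derivative g y) (at y)" if "0 < y" "y < 1" for y
    using DERIV_minus[OF f_der[OF that]] by simp
  from integral_s_deriv_interp[OF this assms] show ?thesis by simp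
qed

lemma integrable_on_weighted_g:
  assumes "continuous_on {0..1} wgt" "0 < x" "x < 1" "0 < v" "v < 1" "0 \<le> a" "b \<le> 1"
  shows "(\<lambda>s. wgt s * g (interp x v s)) integrable_on {a..b}"
  using weighted_interp_integrable_on[OF continuous_on_g] assms by blast

lemma g_interp_pos: "0 < x \<Longrightarrow> x < 1 \<Longrightarrow> 0 < v \<Longrightarrow> v < 1 \<Longrightarrow> 0 \<le> s \<Longrightarrow> s \<le> 1 \<Longrightarrow> 0 < g (interp x v s)"
  using interp_in_unit g_pos by presburger

lemma A_lower:
  assumes "0 < v" "v < x" "x < 1"
  shows "(f v - f x) / (2 * (x - v)) \<le> A x v"
proof -
  have "integral {0..1} (\<lambda>s. s * g (interp x v s)) \<le> integral {0..1} (\<lambda>s. 1 * g (interp x v s))"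
    using assms g_interp_pos[of x v] g_interp_pos[of x v, THEN less_imp_le]
    by (intro integral_le integrable_on_weighted_g mult_right_mono) (auto intro: continuous_intros)
  then show ?thesis using integral_s_g_interp[of x v 0 1] assms by (simp add: A_def weighted_int_def)
qed

lemma N_upper:
  assumes "0 < v" "v < x" "x < 1"
  shows "N x v \<le> (f v - f x) / (2 * (x - v))"
proof -
  have "integral {0..1} (\<lambda>s. s\<^sup>2 * g (interp x v s)) \<le> integral {0..1} (\<lambda>s. s * g (interp x v s))"
    using assms g_interp_pos[of x v] g_interp_pos[of x v, THEN less_imp_le]
    by (intro integral_le integrable_on_weighted_g mult_right_mono)
       (auto intro: continuous_intros simp: power2_eq_square mult_left_le_one_le)
  then show ?thesis using integral_s_g_interp[of x v 0 1] assms by (simp add: N_def weighted_int_def)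
qed

lemma N_lower:
  assumes "0 < v" "v < x" "x < 1" "0 < s0" "s0 \<le> 1"
  shows "s0 * (f v - f (interp x v s0)) / (2 * (x - v)) \<le> N x v"
proof -
  have split: "integral {0..s0} (\<lambda>s. s\<^sup>2 * g (interp x v s)) + integral {s0..1} (\<lambda>s. s\<^sup>2 * g (interp x v s))
      = N x v"
    unfolding N_def weighted_int_def using assms
    by (intro Henstock_Kurzweil_Integration.integral_combine integrable_on_weighted_g)
       (auto intro: continuous_intros)
  have "0 \<le> integral {0..s0} (\<lambda>s. s\<^sup>2 * g (interp x v s))"
    using assms g_interp_pos[of x v] g_interp_pos[of x v, THEN less_imp_le]
    by (intro integral_nonneg integrable_on_weighted_g) (auto intro: continuous_intros less_imp_le)
  moreover have "integral {s0..1} (\<lambda>s. s0 * (s * g (interp x v s))) \<le> integral {s0..1} (\<lambda>s. s\<^sup>2 * g (interp x v s))"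
    using assms g_interp_pos[of x v] g_interp_pos[of x v, THEN less_imp_le]
    by (intro integral_le integrable_on_mult_right integrable_on_weighted_g)
       (auto intro: continuous_intros mult_right_mono simp: power2_eq_square mult.assoc[symmetric])
  moreover have "integral {s0..1} (\<lambda>s. s0 * (s * g (interp x v s)))
      = s0 * ((f v - f (interp x v s0)) / (2 * (x - v)))"
    using integral_s_g_interp[of x v s0 1] assms by simp
  ultimately show ?thesis using split by simp
qed

lemma A_upper:
  assumes "0 < v" "v < x" "x < 1" "0 < s0" "s0 \<le> 1" "0 \<le> B"
    and B: "\<And>s. 0 \<le> s \<Longrightarrow> s \<le> s0 \<Longrightarrow> g (interp x v s) \<le> B"
  shows "A x v \<le> B + (f v - f (interp x v s0)) / (2 * s0 * (x - v))"
proof -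
  have split: "integral {0..s0} (\<lambda>s. 1 * g (interp x v s)) + integral {s0..1} (\<lambda>s. 1 * g (interp x v s))
      = A x v"
    unfolding A_def weighted_int_def using assms
    by (intro Henstock_Kurzweil_Integration.integral_combine integrable_on_weighted_g) auto
  have "integral {0..s0} (\<lambda>s. 1 * g (interp x v s)) \<le> integral {0..s0} (\<lambda>s. B)"
    using assms by (intro integral_le integrable_on_weighted_g) auto
  also have "\<dots> \<le> B" using assms by (simp add: mult_left_le_one_le)
  finally have head: "integral {0..s0} (\<lambda>s. 1 * g (interp x v s)) \<le> B" .
  have "integral {s0..1} (\<lambda>s. 1 * g (interp x v s)) \<le> integral {s0..1} (\<lambda>s. (1 / s0) * (s * g (interp x v s)))"
    using assms g_interp_pos[of x v] g_interp_pos[of x v, THEN less_imp_le]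
    by (intro integral_le integrable_on_mult_right integrable_on_weighted_g)
       (auto intro: continuous_intros simp: field_simps)
  also have "\<dots> = (f v - f (interp x v s0)) / (2 * s0 * (x - v))"
    using integral_s_g_interp[of x v s0 1] assms by simp
  finally show ?thesis using split head by linarith
qed

end

lemma sqrt_cube_has_derivative_x:
  assumes "v < x"
  shows "((\<lambda>x. (x - v) * sqrt (x - v)) has_real_derivative 3 / 2 * sqrt (x - v)) (at x)"
proof -
  have "((\<lambda>x. sqrt (x - v)) has_real_derivative inverse (sqrt (x - v)) / 2 * 1) (at x)"
    by (rule DERIV_chain2[where f=sqrt and g="\<lambda>x. x - v", OF DERIV_real_sqrt])
       (use assms in \<open>auto intro!: derivative_eq_intros\<close>)
  from DERIV_mult[OF DERIV_diff[OF DERIV_ident DERIV_const] this] show ?thesis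
    by (rule DERIV_cong) (use assms in \<open>simp add: field_simps real_sqrt_mult_self flip: real_sqrt_mult\<close>)
qed

lemma sqrt_cube_has_derivative_v:
  assumes "v < x"
  shows "((\<lambda>v. (x - v) * sqrt (x - v)) has_real_derivative - 3 / 2 * sqrt (x - v)) (at v)"
proof -
  have "((\<lambda>v. sqrt (x - v)) has_real_derivative inverse (sqrt (x - v)) / 2 * (- 1)) (at v)"
    by (rule DERIV_chain2[where f=sqrt and g="\<lambda>v. x - v", OF DERIV_real_sqrt])
       (use assms in \<open>auto intro!: derivative_eq_intros\<close>)
  from DERIV_mult[OF DERIV_diff[OF DERIV_const DERIV_ident] this] show ?thesis
    by (rule DERIV_cong) (use assms in \<open>simp add: field_simps real_sqrt_mult_self flip: real_sqrt_mult\<close>)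
qed

context inverse_profile
begin

definition h :: "real \<Rightarrow> real \<Rightarrow> real" where "h t p = g p - 60 * t * p"
text \<open>\<open>Phi\<close> is \<open>Phi0\<close> after the substitution (\<open>Phi0_eq_Phi\<close>), and \<open>E t u v\<close> is the integral in the
  second equation of the system (\<open>E_eq_integral\<close>).\<close>

definition Phi :: "real \<Rightarrow> real \<Rightarrow> real \<Rightarrow> real" where "Phi t x v = A x v - 20 * t * (2 * x + v)"
definition Eg :: "real \<Rightarrow> real \<Rightarrow> real" where "Eg x v = 2 * ((x - v) * sqrt (x - v)) * N x v"
definition Ep :: "real \<Rightarrow> real \<Rightarrow> real" where "Ep x v = (x - v) * sqrt (x - v) * (2 * x + 3 * v)"
definition E :: "real \<Rightarrow> real \<Rightarrow> real \<Rightarrow> real" where "E t x v = Eg x v - 8 * t * Ep x v"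

lemma Phi_eq_integral_h:
  assumes "0 < x" "x < 1" "0 < v" "v < 1"
  shows "Phi t x v = integral {0..1} (\<lambda>s. h t (interp x v s))"
proof -
  have "((\<lambda>s. 1 * g (interp x v s) - 60 * t * interp x v s) has_integral A x v - 60 * t * ((2 * x + v) / 3)) {0..1}"
    unfolding A_def weighted_int_def using assms
    by (intro has_integral_diff integrable_integral has_integral_mult_right interp_has_integral
        integrable_on_weighted_g) auto
  then show ?thesis by (simp add: h_def Phi_def integral_unique)
qed

lemma Phi_has_derivative_x:
  "0 < v \<Longrightarrow> v < 1 \<Longrightarrow> 0 < x \<Longrightarrow> x < 1 \<Longrightarrow> ((\<lambda>x. Phi t x v) has_real_derivative Ax x v - 40 * t) (at x)"
  unfolding Phi_def by (auto intro!: derivative_eq_intros A_has_derivative_x)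

lemma Phi_diag: "0 < v \<Longrightarrow> v < 1 \<Longrightarrow> Phi t v v = h t v"
  unfolding Phi_def h_def A_def using weighted_int_diag[of g v] by simp

lemma Eg_has_derivative_x:
  assumes "0 < v" "v < x" "x < 1"
  shows "((\<lambda>x. Eg x v) has_real_derivative sqrt (x - v) * A x v) (at x)"
  unfolding Eg_def
  by (rule DERIV_cong[OF DERIV_mult[OF DERIV_cmult[OF sqrt_cube_has_derivative_x] N_has_derivative_x]])
     (use assms in \<open>auto simp: field_simps\<close>)

lemma Eg_has_derivative_v:
  assumes "0 < v" "v < x" "x < 1"
  shows "((\<lambda>v. Eg x v) has_real_derivative - sqrt (x - v) * g v) (at v)"
  unfolding Eg_def
  by (rule DERIV_cong[OF DERIV_mult[OF DERIV_cmult[OF sqrt_cube_has_derivative_v] N_has_derivative_v]])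
     (use assms in \<open>auto simp: field_simps\<close>)

lemma Ep_has_derivative_x:
  assumes "v < x"
  shows "((\<lambda>x. Ep x v) has_real_derivative 5 / 2 * sqrt (x - v) * (2 * x + v)) (at x)"
  unfolding Ep_def
  by (rule DERIV_cong[OF DERIV_mult[OF sqrt_cube_has_derivative_x]])
     (use assms in \<open>auto intro!: derivative_eq_intros simp: field_simps\<close>)

lemma Ep_has_derivative_v:
  assumes "v < x"
  shows "((\<lambda>v. Ep x v) has_real_derivative - 15 / 2 * v * sqrt (x - v)) (at v)"
  unfolding Ep_def
  by (rule DERIV_cong[OF DERIV_mult[OF sqrt_cube_has_derivative_v]])
     (use assms in \<open>auto intro!: derivative_eq_intros simp: field_simps\<close>)

lemma Ep_pos: "v < x \<Longrightarrow> 0 < v \<Longrightarrow> 0 < Ep x v"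
  by (simp add: Ep_def)

lemma E_has_derivative_x:
  assumes "0 < v" "v < x" "x < 1"
  shows "((\<lambda>x. E t x v) has_real_derivative sqrt (x - v) * Phi t x v) (at x)"
  unfolding E_def
  by (rule DERIV_cong[OF DERIV_diff[OF Eg_has_derivative_x[OF assms] DERIV_cmult[OF Ep_has_derivative_x]]])
     (use assms in \<open>auto simp: Phi_def algebra_simps\<close>)

lemma E_has_derivative_v:
  assumes "0 < v" "v < x" "x < 1"
  shows "((\<lambda>v. E t x v) has_real_derivative - sqrt (x - v) * h t v) (at v)"
  unfolding E_def
  by (rule DERIV_cong[OF DERIV_diff[OF Eg_has_derivative_v[OF assms] DERIV_cmult[OF Ep_has_derivative_v]]])
     (use assms in \<open>auto simp: h_def algebra_simps\<close>)

lemma E_diag: "E t v v = 0"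
  by (simp add: E_def Eg_def Ep_def)

lemma continuous_on_N: "continuous_on ({0<..<1} \<times> {0<..<1}) (\<lambda>z. N (fst z) (snd z))"
proof -
  have "continuous_on ({0<..<1} \<times> {0<..<1})
      (\<lambda>z. integral (cbox 0 1) (\<lambda>s::real. s\<^sup>2 * g (interp (fst z) (snd z) s)))"
    using continuous_on_weighted_interp_param[OF continuous_on_g
        continuous_on_power[OF continuous_on_id, of _ 2] continuous_on_fst[OF continuous_on_id] _
        continuous_on_snd[OF continuous_on_id], where S = "{0<..<1} \<times> {0<..<1}"]
    by (intro integral_continuous_on_param) (auto simp: cbox_interval)
  then show ?thesis by (simp add: N_def weighted_int_def cbox_interval)
qed

lemma continuous_on_E_pair: "continuous_on ({0<..<1} \<times> {0<..<1}) (\<lambda>z. E t (fst z) (snd z))"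
  unfolding E_def Eg_def Ep_def by (intro continuous_intros continuous_on_N)

lemma continuous_on_E:
  assumes "0 < v" "v < 1"
  shows "continuous_on {0<..<1} (\<lambda>x. E t x v)"
  using assms by (intro continuous_on_compose2[OF continuous_on_E_pair, of _ "\<lambda>x. (x, v)", simplified])
    (auto intro!: continuous_intros)

lemma E_eq_integral:
  assumes "0 < v" "v < u" "u < 1"
  shows "integral {v..u} (\<lambda>x. sqrt (x - v) * Phi t x v) = E t u v"
proof -
  have "((\<lambda>x. sqrt (x - v) * Phi t x v) has_integral E t u v - E t v v) {v..u}"
  proof (rule fundamental_theorem_of_calculus_interior)
    show "continuous_on {v..u} (\<lambda>x. E t x v)"
      by (rule continuous_on_subset[OF continuous_on_E]) (use assms in auto)
    show "((\<lambda>x. E t x v) has_vector_derivative sqrt (x - v) * Phi t x v) (at x)" if "x \<in> {v<..<u}" for x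
      using that assms E_has_derivative_x[of v x t]
      by (auto simp: has_real_derivative_iff_has_vector_derivative[symmetric])
  qed (use assms in simp)
  then show ?thesis by (simp add: E_diag integral_unique)
qed

lemma Eg_upper:
  assumes "0 < v" "v < x" "x < 1"
  shows "Eg x v \<le> sqrt (x - v) * (f v - f x)"
proof -
  have "Eg x v \<le> (2 * ((x - v) * sqrt (x - v))) * ((f v - f x) / (2 * (x - v)))"
    unfolding Eg_def using N_upper[OF assms] assms by (intro mult_left_mono) auto
  also have "\<dots> = sqrt (x - v) * (f v - f x)" using assms by (simp add: field_simps)
  finally show ?thesis .
qed

lemma Eg_lower:
  assumes "0 < v" "v < x" "x < 1" "0 < s0" "s0 \<le> 1"
  shows "sqrt (x - v) * s0 * (f v - f (interp x v s0)) \<le> Eg x v"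
proof -
  have "sqrt (x - v) * s0 * (f v - f (interp x v s0))
      = (2 * ((x - v) * sqrt (x - v))) * (s0 * (f v - f (interp x v s0)) / (2 * (x - v)))"
    using assms by (simp add: field_simps)
  also have "\<dots> \<le> Eg x v"
    unfolding Eg_def using N_lower[OF assms] assms by (intro mult_left_mono) auto
  finally show ?thesis .
qed

end

context inverse_profile
begin

lemma g1_strict_mono_near_1:
  assumes "1 - e0 < a" "a < b" "b < 1"
  shows "g1 a < g1 b"
proof (rule DERIV_pos_imp_increasing[OF assms(2)])
  fix x assume "a \<le> x" "x \<le> b"
  with assms e0 have "0 < x" "x < 1" "1 - e0 < x" by auto
  then show "\<exists>y. (g1 has_real_derivative y) (at x) \<and> 0 < y"
    using g1_der g2_pos_near_1 by blast
qed

lemma g1_mono_near_1: "1 - e0 < a \<Longrightarrow> a \<le> b \<Longrightarrow> b < 1 \<Longrightarrow> g1 a \<le> g1 b"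
  using g1_strict_mono_near_1[of a b] by (cases "a = b") auto

lemma f_bounded_below_if_g1_bounded:
  assumes "\<And>x. 1 - e0 < x \<Longrightarrow> x < 1 \<Longrightarrow> g1 x \<le> K"
  shows "\<exists>M. \<forall>y. 1 - e0 / 2 \<le> y \<longrightarrow> y < 1 \<longrightarrow> M \<le> f y"
proof -
  define a where "a = 1 - e0 / 2"
  have a: "1 - e0 < a" "a < 1" "0 < a" using e0 by (auto simp: a_def)
  define B where "B = max 0 (g a + max K 0)"
  have gB: "g y \<le> B" if y: "a \<le> y" "y < 1" for y
  proof -
    have "g y \<le> g a + max K 0 * (y - a)"
    proof (rule DERIV_upper_bound_growth[OF y(1)])
      fix z assume "a \<le> z" "z \<le> y"
      then have z: "0 < z" "z < 1" "1 - e0 < z" using y a by auto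
      show "(g has_real_derivative g1 z) (at z)" by (rule g_der[OF z(1,2)])
      show "g1 z \<le> max K 0" using assms[OF z(3,2)] by linarith
    qed
    moreover have "max K 0 * (y - a) \<le> max K 0" using y a by (simp add: mult_left_le)
    ultimately show ?thesis by (simp add: B_def)
  qed
  have "- f y \<le> - f a + B * (y - a)" if y: "a \<le> y" "y < 1" for y
  proof (rule DERIV_upper_bound_growth[OF y(1)])
    fix z assume "a \<le> z" "z \<le> y"
    then have z: "0 < z" "z < 1" using y a by auto
    show "((\<lambda>x. - f x) has_real_derivative g z) (at z)" using DERIV_minus[OF f_der[OF z]] by simp
    show "g z \<le> B" using gB \<open>a \<le> z\<close> z by simp
  qed
  moreover have "B * (y - a) \<le> B" if "a \<le> y" "y < 1" for y
    using that a by (simp add: B_def mult_left_le)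
  ultimately have "f a - B \<le> f y" if "a \<le> y" "y < 1" for y
    using that by (smt (verit))
  then show ?thesis unfolding a_def by blast
qed

lemma g1_unbounded_near_1: "\<exists>c1<1. \<forall>x. c1 \<le> x \<longrightarrow> x < 1 \<longrightarrow> K < g1 x"
proof (rule ccontr)
  assume nc: "\<not> ?thesis"
  have "g1 x \<le> K" if "1 - e0 < x" "x < 1" for x
  proof (rule ccontr)
    assume "\<not> g1 x \<le> K"
    then have "\<forall>y. x \<le> y \<longrightarrow> y < 1 \<longrightarrow> K < g1 y"
      using g1_mono_near_1[of x] that by force
    then show False using nc that by blast
  qed
  then obtain M where M: "\<And>y. 1 - e0 / 2 \<le> y \<Longrightarrow> y < 1 \<Longrightarrow> M \<le> f y"
    using f_bounded_below_if_g1_bounded by blast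
  obtain b where b: "b < 1" "\<And>x. b < x \<Longrightarrow> x < 1 \<Longrightarrow> f x < M" using f_at_1[of M] by blast
  define y where "y = (max (1 - e0 / 2) b + 1) / 2"
  have "1 - e0 / 2 \<le> y" "b < y" "y < 1" using b e0 by (auto simp: y_def)
  then show False using M[of y] b(2)[of y] by simp
qed

end

context inverse_profile
begin

lemma g2_bounded_below: "\<exists>M\<ge>0. \<forall>y. 0 < y \<longrightarrow> y < 1 \<longrightarrow> - M \<le> g2 y"
proof -
  have "continuous_on {e0..1 - e0} g2" by (rule continuous_on_subset[OF continuous_on_g2]) (use e0 in auto)
  moreover have "{e0..1 - e0} \<noteq> {}" using e0 by auto
  ultimately obtain m where m: "\<And>y. y \<in> {e0..1 - e0} \<Longrightarrow> g2 m \<le> g2 y"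
    using continuous_attains_inf[OF compact_Icc] by blast
  have "- max 0 (- g2 m) \<le> g2 y" if "0 < y" "y < 1" for y
  proof (cases "y < e0 \<or> 1 - e0 < y")
    case True
    then have "0 < g2 y" using g2_pos_near_0[of y] g2_pos_near_1[of y] that by blast
    then show ?thesis by simp
  next
    case False
    then show ?thesis using m[of y] by simp
  qed
  then show ?thesis by (intro exI[of _ "max 0 (- g2 m)"]) auto
qed

lemma integral_s_g2_interp:
  assumes "0 < x" "x < 1" "0 < v" "v < 1" "x \<noteq> v" "0 \<le> a" "a \<le> b" "b \<le> 1"
  shows "integral {a..b} (\<lambda>s. s * g2 (interp x v s)) = (g1 (interp x v a) - g1 (interp x v b)) / (2 * (x - v))"
  by (rule integral_s_deriv_interp[OF g1_der assms])

lemma integrable_on_weighted_g2: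
  assumes "continuous_on {0..1} wgt" "0 < x" "x < 1" "0 < v" "v < 1" "0 \<le> a" "b \<le> 1"
  shows "(\<lambda>s. wgt s * g2 (interp x v s)) integrable_on {a..b}"
  using weighted_interp_integrable_on[OF continuous_on_g2] assms by blast

lemma Axx_pos_close_to_1:
  assumes "1 - e0 < v" "v \<le> x" "x < 1"
  shows "0 < Axx x v"
  unfolding Axx_def weighted_int_def
proof (rule integral_pos_of_pos_on_first_half)
  have "0 < v" "v < 1" "0 < x" using assms e0 by auto
  then show "continuous_on {0..1} (\<lambda>s. (1 - s\<^sup>2)\<^sup>2 * g2 (interp x v s))"
    using assms by (intro continuous_on_weighted_interp continuous_on_g2 continuous_intros) auto
  have g2p: "0 < g2 (interp x v s)" if "0 \<le> s" "s \<le> 1" for s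
    using interp_between[OF assms(2) that] assms by (intro g2_pos_near_1) auto
  show "0 \<le> (1 - s\<^sup>2)\<^sup>2 * g2 (interp x v s)" if "0 \<le> s" "s \<le> 1" for s
    using g2p[OF that] by simp
  show "0 < (1 - s\<^sup>2)\<^sup>2 * g2 (interp x v s)" if "0 \<le> s" "s \<le> 1/2" for s
  proof -
    have "s\<^sup>2 \<le> (1/2)\<^sup>2" using that by (intro power_mono) auto
    then show ?thesis using g2p[of s] that by (simp add: power2_eq_square)
  qed
qed

end

context inverse_profile
begin

lemma Axx_head_lower:
  assumes "0 < \<sigma>" "\<sigma> \<le> 1" "0 < v" "v < x" "x < 1" "1 - e0 < interp x v \<sigma>"
  shows "(1 - \<sigma>\<^sup>2)\<^sup>2 / \<sigma> * ((g1 x - g1 (interp x v \<sigma>)) / (2 * (x - v)))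
    \<le> integral {0..\<sigma>} (\<lambda>s. (1 - s\<^sup>2)\<^sup>2 * g2 (interp x v s))"
proof -
  have "integral {0..\<sigma>} (\<lambda>s. (1 - \<sigma>\<^sup>2)\<^sup>2 / \<sigma> * (s * g2 (interp x v s)))
      \<le> integral {0..\<sigma>} (\<lambda>s. (1 - s\<^sup>2)\<^sup>2 * g2 (interp x v s))"
  proof (rule integral_le)
    show "(\<lambda>s. (1 - \<sigma>\<^sup>2)\<^sup>2 / \<sigma> * (s * g2 (interp x v s))) integrable_on {0..\<sigma>}"
      "(\<lambda>s. (1 - s\<^sup>2)\<^sup>2 * g2 (interp x v s)) integrable_on {0..\<sigma>}"
      using assms by (auto intro!: integrable_on_mult_right integrable_on_weighted_g2 continuous_intros)
    fix s assume s: "s \<in> {0..\<sigma>}"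
    then have ss: "s\<^sup>2 \<le> \<sigma>\<^sup>2" "\<sigma>\<^sup>2 \<le> 1" using assms by (auto intro: power_mono simp: power_le_one)
    have "interp x v \<sigma> \<le> interp x v s" unfolding interp_def
      using ss assms by (intro diff_left_mono mult_right_mono) auto
    then have g2p: "0 < g2 (interp x v s)"
      using interp_between[of v x s] s assms by (intro g2_pos_near_1) auto
    have "s * (1 - \<sigma>\<^sup>2)\<^sup>2 \<le> \<sigma> * (1 - \<sigma>\<^sup>2)\<^sup>2" using s by (intro mult_right_mono) auto
    then have "(1 - \<sigma>\<^sup>2)\<^sup>2 / \<sigma> * s \<le> (1 - \<sigma>\<^sup>2)\<^sup>2" using assms by (simp add: field_simps)
    also have "\<dots> \<le> (1 - s\<^sup>2)\<^sup>2" using ss by (intro power_mono) auto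
    finally have "((1 - \<sigma>\<^sup>2)\<^sup>2 / \<sigma> * s) * g2 (interp x v s) \<le> (1 - s\<^sup>2)\<^sup>2 * g2 (interp x v s)"
      using g2p by (intro mult_right_mono) auto
    then show "(1 - \<sigma>\<^sup>2)\<^sup>2 / \<sigma> * (s * g2 (interp x v s)) \<le> (1 - s\<^sup>2)\<^sup>2 * g2 (interp x v s)"
      by (simp only: mult.assoc)
  qed
  moreover have "integral {0..\<sigma>} (\<lambda>s. (1 - \<sigma>\<^sup>2)\<^sup>2 / \<sigma> * (s * g2 (interp x v s)))
      = (1 - \<sigma>\<^sup>2)\<^sup>2 / \<sigma> * ((g1 x - g1 (interp x v \<sigma>)) / (2 * (x - v)))"
    using integral_s_g2_interp[of x v 0 \<sigma>] assms by simp
  ultimately show ?thesis by simp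
qed

lemma Axx_tail_lower:
  assumes M: "0 \<le> M" "\<And>y. 0 < y \<Longrightarrow> y < 1 \<Longrightarrow> - M \<le> g2 y"
    and "0 \<le> \<sigma>" "\<sigma> \<le> 1" "0 < x" "x < 1" "0 < v" "v < 1"
  shows "- M \<le> integral {\<sigma>..1} (\<lambda>s. (1 - s\<^sup>2)\<^sup>2 * g2 (interp x v s))"
proof -
  have "integral {\<sigma>..1} (\<lambda>s. - M) \<le> integral {\<sigma>..1} (\<lambda>s. (1 - s\<^sup>2)\<^sup>2 * g2 (interp x v s))"
  proof (rule integral_le)
    show "(\<lambda>s. (1 - s\<^sup>2)\<^sup>2 * g2 (interp x v s)) integrable_on {\<sigma>..1}"
      using assms by (auto intro!: integrable_on_weighted_g2 continuous_intros)
    fix s assume s: "s \<in> {\<sigma>..1}"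
    then have w: "0 \<le> (1 - s\<^sup>2)\<^sup>2" "(1 - s\<^sup>2)\<^sup>2 \<le> 1" using assms by (auto simp: power_le_one abs_square_le_1)
    have "- M \<le> (1 - s\<^sup>2)\<^sup>2 * (- M)" using w M(1) by (simp add: mult_left_le_one_le)
    also have "\<dots> \<le> (1 - s\<^sup>2)\<^sup>2 * g2 (interp x v s)"
      using w M(2) interp_in_unit[of x v s] s assms by (intro mult_left_mono) auto
    finally show "- M \<le> (1 - s\<^sup>2)\<^sup>2 * g2 (interp x v s)" .
  qed auto
  moreover have "- M \<le> integral {\<sigma>..1} (\<lambda>s. - M)"
    using assms mult_left_le[of "1 - \<sigma>" M] by (simp add: mult.commute)
  ultimately show ?thesis by linarith
qed

end

context inverse_profile
begin

text \<open>With \<open>\<sigma> = sqrt e0 / 2\<close>, the part of \<open>Axx x v\<close> over \<open>[0, \<sigma>]\<close> is bounded below through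
  \<open>Axx_head_lower\<close> by a multiple of \<open>g1 x - g1 (1 - e0\<^sup>2 / 8)\<close>, which is large for \<open>x\<close> near 1,
  and the rest is at least \<open>- M\<close>.\<close>

lemma Axx_pos_far_from_diagonal:
  assumes M: "0 \<le> M" "\<And>y. 0 < y \<Longrightarrow> y < 1 \<Longrightarrow> - M \<le> g2 y"
    and x: "1 - e0 / 2 \<le> x" "x < 1" and v: "0 < v" "v \<le> 1 - e0"
    and big: "g1 (1 - e0\<^sup>2 / 8) + sqrt e0 * (M + 1) / (1 - e0 / 4)\<^sup>2 < g1 x"
  shows "0 < Axx x v"
proof -
  define \<sigma> where "\<sigma> = sqrt e0 / 2"
  have "sqrt e0 \<le> sqrt (1 / 4)" using e0 by (intro real_sqrt_le_mono) auto
  then have \<sigma>: "0 < \<sigma>" "\<sigma> \<le> 1" "\<sigma>\<^sup>2 = e0 / 4" using e0 by (auto simp: \<sigma>_def power_divide real_sqrt_divide)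
  have d: "e0 / 2 \<le> x - v" "x - v \<le> 1" using x v e0 by auto
  have "e0 / 4 * (e0 / 2) \<le> e0 / 4 * (x - v)" "e0 / 4 * (x - v) \<le> e0 / 4 * 1"
    using d e0 by (intro mult_left_mono; simp)+
  moreover have "interp x v \<sigma> = x - e0 / 4 * (x - v)" "e0\<^sup>2 / 8 = e0 / 4 * (e0 / 2)"
    by (simp_all only: interp_def \<sigma>(3)) (simp add: power2_eq_square)
  ultimately have p: "1 - e0 < interp x v \<sigma>" "interp x v \<sigma> \<le> 1 - e0\<^sup>2 / 8"
    using x e0 by linarith+
  have g1p: "g1 (interp x v \<sigma>) \<le> g1 (1 - e0\<^sup>2 / 8)"
    using p e0 by (intro g1_mono_near_1) (auto simp: power2_eq_square)
  define Q where "Q = sqrt e0 * (M + 1) / (1 - e0 / 4)\<^sup>2"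
  define w where "w = (1 - \<sigma>\<^sup>2)\<^sup>2 / \<sigma>"
  have w: "0 < w" "w * (Q / 2) = M + 1" using \<sigma> e0 by (simp_all add: w_def Q_def \<sigma>_def field_simps)
  have Q: "0 < Q" using e0 M(1) by (simp add: Q_def)
  have gap: "Q < g1 x - g1 (interp x v \<sigma>)" using big g1p by (simp add: Q_def)
  have "M + 1 < w * ((g1 x - g1 (interp x v \<sigma>)) / 2)"
    using mult_strict_left_mono[OF gap w(1)] w(2) by simp
  also have "\<dots> \<le> w * ((g1 x - g1 (interp x v \<sigma>)) / (2 * (x - v)))"
    using gap Q w(1) d e0 by (intro mult_left_mono divide_left_mono) auto
  also have "\<dots> \<le> integral {0..\<sigma>} (\<lambda>s. (1 - s\<^sup>2)\<^sup>2 * g2 (interp x v s))"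
    unfolding w_def using \<sigma> v x d e0 p by (intro Axx_head_lower) auto
  finally have head: "M + 1 < integral {0..\<sigma>} (\<lambda>s. (1 - s\<^sup>2)\<^sup>2 * g2 (interp x v s))" .
  have "integral {0..\<sigma>} (\<lambda>s. (1 - s\<^sup>2)\<^sup>2 * g2 (interp x v s))
      + integral {\<sigma>..1} (\<lambda>s. (1 - s\<^sup>2)\<^sup>2 * g2 (interp x v s)) = Axx x v"
    unfolding Axx_def weighted_int_def using \<sigma> x v e0
    by (intro Henstock_Kurzweil_Integration.integral_combine integrable_on_weighted_g2 continuous_intros) auto
  moreover have "- M \<le> integral {\<sigma>..1} (\<lambda>s. (1 - s\<^sup>2)\<^sup>2 * g2 (interp x v s))"
    using \<sigma> x v e0 by (intro Axx_tail_lower M) auto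
  ultimately show ?thesis using head by linarith
qed

end

context inverse_profile
begin

lemma Axx_pos_near_1:
  "\<exists>c. 1 - e0 / 2 \<le> c \<and> c < 1 \<and> (\<forall>x v. c \<le> x \<longrightarrow> x < 1 \<longrightarrow> 0 < v \<longrightarrow> v \<le> x \<longrightarrow> 0 < Axx x v)"
proof -
  obtain M where M: "0 \<le> M" "\<And>y. 0 < y \<Longrightarrow> y < 1 \<Longrightarrow> - M \<le> g2 y"
    using g2_bounded_below by blast
  obtain c1 where c1: "c1 < 1"
    "\<And>x. c1 \<le> x \<Longrightarrow> x < 1 \<Longrightarrow> g1 (1 - e0\<^sup>2 / 8) + sqrt e0 * (M + 1) / (1 - e0 / 4)\<^sup>2 < g1 x"
    using g1_unbounded_near_1 by blast
  show ?thesis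
  proof (intro exI[of _ "max c1 (1 - e0 / 2)"] conjI allI impI)
    fix x v assume x: "max c1 (1 - e0 / 2) \<le> x" "x < 1" and v: "0 < v" "v \<le> x"
    show "0 < Axx x v"
    proof (cases "1 - e0 < v")
      case True
      then show ?thesis using x v by (intro Axx_pos_close_to_1) auto
    next
      case False
      then show ?thesis using x v c1(2)[of x] by (intro Axx_pos_far_from_diagonal[OF M]) auto
    qed
  qed (use c1 e0 in auto)
qed

end

context inverse_profile
begin

lemma g1_bounded_above_away_from_1:
  assumes "0 < c" "c < 1"
  shows "\<exists>B\<ge>0. \<forall>p. 0 < p \<longrightarrow> p \<le> c \<longrightarrow> g1 p \<le> B"
proof -
  define a where "a = min (d2 / 2) c"
  have a: "0 < a" "a \<le> c" "a < d2" using d2 assms by (auto simp: a_def)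
  have "continuous_on {a..c} g1" by (rule continuous_on_subset[OF continuous_on_g1]) (use a assms in auto)
  moreover have "{a..c} \<noteq> {}" using a by auto
  ultimately obtain m where m: "\<And>y. y \<in> {a..c} \<Longrightarrow> g1 y \<le> g1 m"
    using continuous_attains_sup[OF compact_Icc] by blast
  have "g1 p \<le> max 0 (g1 m)" if "0 < p" "p \<le> c" for p
  proof (cases "p < a")
    case True
    then show ?thesis using g1_neg_near_0[of p] a that by simp
  next
    case False
    then show ?thesis using m[of p] that by simp
  qed
  then show ?thesis by (intro exI[of _ "max 0 (g1 m)"]) auto
qed

lemma large_t_threshold:
  assumes "0 < c" "c < 1"
  shows "\<exists>T0>0. \<forall>t. T0 \<le> t \<longrightarrow> (\<forall>p. 0 < p \<longrightarrow> p \<le> c \<longrightarrow> g1 p < 60 * t) \<and> g c < 60 * t * c"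
proof -
  obtain B where B: "0 \<le> B" "\<And>p. 0 < p \<Longrightarrow> p \<le> c \<Longrightarrow> g1 p \<le> B"
    using g1_bounded_above_away_from_1[OF assms] by blast
  define q where "q = g c / c"
  have q: "0 \<le> q" "g c = q * c" using g_pos[of c] assms by (simp_all add: q_def)
  show ?thesis
  proof (intro exI[of _ "B + q + 1"] conjI allI impI)
    fix t p :: real assume t: "B + q + 1 \<le> t"
    then show "g1 p < 60 * t" if "0 < p" "p \<le> c" using B(1) B(2)[OF that] q by linarith
    from t have "q < 60 * t" using B(1) q(1) by linarith
    then show "g c < 60 * t * c" using assms q(2) by simp
  qed (use B(1) q in linarith)
qed

end

section \<open>Existence and uniqueness of solutions for large \<open>t\<close>\<close>

text \<open>For \<open>t \<ge> T0\<close>, \<open>h t\<close> is decreasing on \<open>(0, c]\<close> and negative at \<open>c\<close>, while \<open>Phi t \<cdot> v\<close>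
  is strictly convex on \<open>[c, 1)\<close>.\<close>

locale solution_regime = inverse_profile +
  fixes c T0 :: real
  assumes c_ge: "1 - e0 / 2 \<le> c" and c_lt: "c < 1"
    and Axx_pos: "\<And>x v. c \<le> x \<Longrightarrow> x < 1 \<Longrightarrow> 0 < v \<Longrightarrow> v \<le> x \<Longrightarrow> 0 < Axx x v"
    and T0_pos: "0 < T0"
    and g1_less_T0: "\<And>t p. T0 \<le> t \<Longrightarrow> 0 < p \<Longrightarrow> p \<le> c \<Longrightarrow> g1 p < 60 * t"
    and g_c_less_T0: "\<And>t. T0 \<le> t \<Longrightarrow> g c < 60 * t * c"
begin

lemma c_bounds: "1/2 < c" "1 - e0 < c" "0 < c"
  using c_ge e0 by auto

lemma h_has_derivative: "0 < y \<Longrightarrow> y < 1 \<Longrightarrow> (h t has_real_derivative g1 y - 60 * t) (at y)"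
  unfolding h_def[abs_def] by (auto intro!: derivative_eq_intros g_der)

lemma continuous_on_h: "continuous_on {0<..<1} (h t)"
  by (intro continuous_at_imp_continuous_on ballI DERIV_isCont[OF h_has_derivative]) auto

lemma h_strict_antimono:
  assumes "T0 \<le> t" "0 < p" "p < q" "q \<le> c"
  shows "h t q < h t p"
proof (rule DERIV_neg_imp_decreasing[OF assms(3)])
  fix y assume "p \<le> y" "y \<le> q"
  then have "0 < y" "y < 1" "y \<le> c" using assms c_lt by auto
  then show "\<exists>d. (h t has_real_derivative d) (at y) \<and> d < 0"
    using h_has_derivative g1_less_T0[OF assms(1)] by force
qed

lemma h_neg_at_c: "T0 \<le> t \<Longrightarrow> h t c < 0"
  using g_c_less_T0 by (simp add: h_def)

lemma h_pos_beyond: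
  assumes t: "T0 \<le> t" and v: "c < v" "v \<le> p" "p < 1" and hv: "0 < h t v"
  shows "0 < h t p"
proof -
  obtain z where z: "c < z" "z < v" "h t v - h t c = (v - c) * (g1 z - 60 * t)"
    using MVT2[OF v(1), of "h t" "\<lambda>y. g1 y - 60 * t"] h_has_derivative c_bounds v by force
  have "0 < (v - c) * (g1 z - 60 * t)" using z(3) hv h_neg_at_c[OF t] by linarith
  then have gz: "0 < g1 z - 60 * t" using v by (simp add: zero_less_mult_iff)
  have "h t v \<le> h t p"
  proof (rule DERIV_nonneg_imp_nondecreasing[OF v(2)])
    fix y assume y: "v \<le> y" "y \<le> p"
    have "g1 z \<le> g1 y" using z c_bounds y v by (intro g1_mono_near_1) auto
    then show "\<exists>d. (h t has_real_derivative d) (at y) \<and> 0 \<le> d"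
      using h_has_derivative[of y t] y v c_bounds gz by (intro exI[of _ "g1 y - 60 * t"]) auto
  qed
  then show ?thesis using hv by simp
qed

lemma h_interp_strict_antimono_x:
  assumes t: "T0 \<le> t" and v: "0 < v" "v \<le> x1" and x: "x1 < x2" "x2 \<le> c" and s: "0 \<le> s" "s < 1"
  shows "h t (interp x2 v s) < h t (interp x1 v s)"
proof (rule h_strict_antimono[OF t])
  have "s\<^sup>2 < 1" using s by (simp add: power_less_one_iff abs_square_less_1)
  then have "0 < (x2 - x1) * (1 - s\<^sup>2)" using x by simp
  then show "interp x1 v s < interp x2 v s" by (simp add: interp_def algebra_simps)
  show "0 < interp x1 v s" using interp_in_unit[of x1 v s] v x s c_lt by auto
  show "interp x2 v s \<le> c" using interp_between[of v x2 s] s v x by auto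
qed

lemma Phi_strict_antimono:
  assumes t: "T0 \<le> t" and v: "0 < v" "v \<le> x1" and x: "x1 < x2" "x2 \<le> c"
  shows "Phi t x2 v < Phi t x1 v"
proof -
  have x01: "0 < x1" "x1 < 1" "0 < x2" "x2 < 1" "v < 1" using v x c_lt by auto
  have "0 < integral {0..1} (\<lambda>s. h t (interp x1 v s) - h t (interp x2 v s))"
  proof (rule integral_pos_of_pos_on_first_half)
    show "continuous_on {0..1} (\<lambda>s. h t (interp x1 v s) - h t (interp x2 v s))"
      using continuous_on_weighted_interp[OF continuous_on_h _ _ _ v(1) x01(5), of "\<lambda>s. 1"] x01
      by (auto intro!: continuous_intros)
    show "0 \<le> h t (interp x1 v s) - h t (interp x2 v s)" if "0 \<le> s" "s \<le> 1" for s
      using h_interp_strict_antimono_x[OF assms, of s] that by (cases "s = 1") auto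
    show "0 < h t (interp x1 v s) - h t (interp x2 v s)" if "0 \<le> s" "s \<le> 1/2" for s
      using h_interp_strict_antimono_x[OF assms, of s] that by auto
  qed
  also have "\<dots> = Phi t x1 v - Phi t x2 v"
    using x01 v weighted_interp_integrable_on[OF continuous_on_h, of "\<lambda>s. 1"]
    by (simp add: Phi_eq_integral_h integral_diff)
  finally show ?thesis by simp
qed

lemma Phi_pos_if_h_pos:
  assumes v: "0 < v" "v \<le> x" "x < 1" and hp: "\<And>p. v \<le> p \<Longrightarrow> p \<le> x \<Longrightarrow> 0 < h t p"
  shows "0 < Phi t x v"
proof -
  have "0 < integral {0..1} (\<lambda>s. h t (interp x v s))"
  proof (rule integral_pos_of_pos_on_first_half)
    show "continuous_on {0..1} (\<lambda>s. h t (interp x v s))"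
      using continuous_on_weighted_interp[OF continuous_on_h, of "\<lambda>s. 1" x v] v by simp
    show "0 \<le> h t (interp x v s)" if "0 \<le> s" "s \<le> 1" for s
      using interp_between[OF v(2) that] hp less_imp_le by blast
    show "0 < h t (interp x v s)" if "0 \<le> s" "s \<le> 1/2" for s
      using interp_between[OF v(2)] that hp by simp
  qed
  then show ?thesis using Phi_eq_integral_h v by simp
qed

lemma Ax_strict_mono_near_1:
  assumes "c \<le> a" "a < b" "b < 1" "0 < v" "v \<le> a"
  shows "Ax a v < Ax b v"
proof (rule DERIV_pos_imp_increasing[OF assms(2)])
  fix x assume "a \<le> x" "x \<le> b"
  with assms c_bounds have "0 < x" "x < 1" "c \<le> x" "v \<le> x" "v < 1" by auto
  then show "\<exists>y. ((\<lambda>x. Ax x v) has_real_derivative y) (at x) \<and> 0 < y"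
    using Ax_has_derivative_x Axx_pos assms(4) by blast
qed

lemma Phi_strict_convex_near_1:
  assumes "c \<le> a" "a < b" "b < d" "d < 1" "0 < v" "v \<le> a"
  shows "(Phi t b v - Phi t a v) * (d - b) < (Phi t d v - Phi t b v) * (b - a)"
proof -
  have der: "\<And>x. a \<le> x \<Longrightarrow> x \<le> d \<Longrightarrow> ((\<lambda>x. Phi t x v) has_real_derivative Ax x v - 40 * t) (at x)"
    using assms c_bounds by (intro Phi_has_derivative_x) auto
  obtain z1 where z1: "a < z1" "z1 < b" "Phi t b v - Phi t a v = (b - a) * (Ax z1 v - 40 * t)"
    using MVT2[OF assms(2), of "\<lambda>x. Phi t x v" "\<lambda>x. Ax x v - 40 * t"] der assms by force
  obtain z2 where z2: "b < z2" "z2 < d" "Phi t d v - Phi t b v = (d - b) * (Ax z2 v - 40 * t)"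
    using MVT2[OF assms(3), of "\<lambda>x. Phi t x v" "\<lambda>x. Ax x v - 40 * t"] der assms by force
  have "Ax z1 v < Ax z2 v" using z1 z2 assms by (intro Ax_strict_mono_near_1) auto
  have "(Phi t b v - Phi t a v) * (d - b) = (Ax z1 v - 40 * t) * ((b - a) * (d - b))"
    using z1(3) by simp
  also have "\<dots> < (Ax z2 v - 40 * t) * ((b - a) * (d - b))"
    using \<open>Ax z1 v < Ax z2 v\<close> assms by (intro mult_strict_right_mono) auto
  also have "\<dots> = (Phi t d v - Phi t b v) * (b - a)" using z2(3) by simp
  finally show ?thesis .
qed

lemma Phi_neg_before_zero:
  assumes "c \<le> a" "a < x" "x < u" "u < 1" "0 < v" "v \<le> a" "Phi t a v \<le> 0" "Phi t u v = 0"
  shows "Phi t x v < 0"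
proof (rule ccontr)
  assume "\<not> Phi t x v < 0"
  then have "0 \<le> (Phi t x v - Phi t a v) * (u - x)" "(Phi t u v - Phi t x v) * (x - a) \<le> 0"
    using assms by (auto intro!: mult_nonneg_nonneg mult_nonpos_nonneg)
  then show False using Phi_strict_convex_near_1[of a x u v t] assms by linarith
qed

lemma Phi_pos_after_zero:
  assumes "c \<le> a" "a < u" "u < x" "x < 1" "0 < v" "v \<le> a" "Phi t a v \<le> 0" "Phi t u v = 0"
  shows "0 < Phi t x v"
proof (rule ccontr)
  assume "\<not> 0 < Phi t x v"
  then have "0 \<le> (Phi t u v - Phi t a v) * (x - u)" "(Phi t x v - Phi t u v) * (u - a) \<le> 0"
    using assms by (auto intro!: mult_nonneg_nonneg mult_nonpos_nonneg)
  then show False using Phi_strict_convex_near_1[of a u x v t] assms by linarith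
qed

lemma Phi_pos_before_two_zeros:
  assumes "c \<le> a" "a < y" "y < u" "u < 1" "0 < v" "v \<le> a" "Phi t y v = 0" "Phi t u v = 0"
  shows "0 < Phi t a v"
proof (rule ccontr)
  assume "\<not> 0 < Phi t a v"
  then have "0 \<le> (Phi t y v - Phi t a v) * (u - y)" using assms by (intro mult_nonneg_nonneg) auto
  then show False using Phi_strict_convex_near_1[of a y u v t] assms by simp
qed

lemma Phi_zero_between_if_E_zero:
  assumes "0 < v" "v < u" "u < 1" "E t u v = 0"
  obtains y where "v < y" "y < u" "Phi t y v = 0"
proof -
  have "continuous_on {v..u} (\<lambda>x. E t x v)"
    by (rule continuous_on_subset[OF continuous_on_E]) (use assms in auto)
  moreover have "(\<lambda>x. E t x v) differentiable (at x)" if "v < x" "x < u" for x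
    using E_has_derivative_x[of v x t] that assms real_differentiable_def by force
  ultimately obtain l z where z: "v < z" "z < u" "((\<lambda>x. E t x v) has_real_derivative l) (at z)"
      "E t u v - E t v v = (u - v) * l"
    using MVT[OF assms(2)] by blast
  have "l = sqrt (z - v) * Phi t z v"
    using z assms by (intro DERIV_unique[OF z(3)] E_has_derivative_x) auto
  moreover have "l = 0" using z(4) assms E_diag by simp
  ultimately show ?thesis using that z by simp
qed

lemma E_strict_mono_if_Phi_pos:
  assumes "0 < v" "v \<le> a" "a < b" "b < 1" and "\<And>x. a < x \<Longrightarrow> x < b \<Longrightarrow> 0 < Phi t x v"
  shows "E t a v < E t b v"
proof (rule DERIV_pos_imp_increasing_open[OF assms(3)])
  show "\<exists>y. ((\<lambda>x. E t x v) has_real_derivative y) (at x) \<and> 0 < y" if "a < x" "x < b" for x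
    using that assms E_has_derivative_x[of v x t] by (intro exI[of _ "sqrt (x - v) * Phi t x v"]) auto
  show "continuous_on {a..b} (\<lambda>x. E t x v)"
    by (rule continuous_on_subset[OF continuous_on_E]) (use assms in auto)
qed

lemma E_strict_antimono_if_Phi_neg:
  assumes "0 < v" "v \<le> a" "a < b" "b < 1" and "\<And>x. a < x \<Longrightarrow> x < b \<Longrightarrow> Phi t x v < 0"
  shows "E t b v < E t a v"
proof (rule DERIV_neg_imp_decreasing_open[OF assms(3)])
  show "\<exists>y. ((\<lambda>x. E t x v) has_real_derivative y) (at x) \<and> y < 0" if "a < x" "x < b" for x
    using that assms E_has_derivative_x[of v x t]
    by (intro exI[of _ "sqrt (x - v) * Phi t x v"]) (auto simp: mult_pos_neg)
  show "continuous_on {a..b} (\<lambda>x. E t x v)"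
    by (rule continuous_on_subset[OF continuous_on_E]) (use assms in auto)
qed

end

context solution_regime
begin

definition solution :: "real \<Rightarrow> real \<Rightarrow> real \<Rightarrow> bool" where
  "solution t u v \<longleftrightarrow> 0 < v \<and> v < u \<and> u < 1 \<and> Phi t u v = 0 \<and> E t u v = 0"

lemma solution_v_lt_c:
  assumes t: "T0 \<le> t" and s: "solution t u v" and y: "v < y" "y < u" "Phi t y v = 0"
  shows "v < c"
proof (rule ccontr)
  assume "\<not> v < c"
  have uv: "0 < v" "v < u" "u < 1" "Phi t u v = 0" using s by (auto simp: solution_def)
  have "0 < Phi t v v" using \<open>\<not> v < c\<close> y uv by (intro Phi_pos_before_two_zeros[of v y u]) auto
  then have hv: "0 < h t v" using Phi_diag uv by simp
  have cv: "c < v" using \<open>\<not> v < c\<close> hv h_neg_at_c[OF t] by (cases "c = v") auto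
  have "0 < Phi t u v" using uv by (intro Phi_pos_if_h_pos) (auto intro: h_pos_beyond[OF t cv _ _ hv])
  then show False using uv by simp
qed

lemma solution_c_lt_u:
  assumes t: "T0 \<le> t" and s: "solution t u v" and y: "v < y" "y < u" "Phi t y v = 0"
  shows "c < u"
proof (rule ccontr)
  assume "\<not> c < u"
  have uv: "0 < v" "Phi t u v = 0" using s by (auto simp: solution_def)
  have "Phi t u v < Phi t y v" using \<open>\<not> c < u\<close> y uv by (intro Phi_strict_antimono[OF t]) auto
  then show False using uv y by simp
qed

lemma Phi_signs_if_first_zero_le_c:
  assumes t: "T0 \<le> t" and s: "solution t u v" and y: "v < y" "y < u" "Phi t y v = 0" "y \<le> c"
    and vc: "v < c" and cu: "c < u"
  shows "\<And>x. v \<le> x \<Longrightarrow> x < y \<Longrightarrow> 0 < Phi t x v"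
    "\<And>x. y < x \<Longrightarrow> x < u \<Longrightarrow> Phi t x v < 0"
    "\<And>x. u < x \<Longrightarrow> x < 1 \<Longrightarrow> 0 < Phi t x v"
proof -
  have uv: "0 < v" "u < 1" "Phi t u v = 0" using s by (auto simp: solution_def)
  have Pc: "Phi t c v \<le> 0"
    using Phi_strict_antimono[OF t uv(1) less_imp_le[OF y(1)], of c] y by (cases "y = c") auto
  show "0 < Phi t x v" if "v \<le> x" "x < y" for x
    using Phi_strict_antimono[OF t uv(1) that y(4)] y by simp
  show "Phi t x v < 0" if "y < x" "x < u" for x
  proof (cases "x \<le> c")
    case True
    then show ?thesis using Phi_strict_antimono[OF t uv(1) less_imp_le[OF y(1)] that(1)] y by simp
  next
    case False
    then show ?thesis using that uv vc Pc by (intro Phi_neg_before_zero[of c x u]) auto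
  qed
  show "0 < Phi t x v" if "u < x" "x < 1" for x
    using that uv vc Pc cu by (intro Phi_pos_after_zero[of c u x]) auto
qed

lemma Phi_signs_if_first_zero_gt_c:
  assumes t: "T0 \<le> t" and s: "solution t u v" and y: "v < y" "y < u" "Phi t y v = 0" "c < y"
    and vc: "v < c"
  shows "\<And>x. v \<le> x \<Longrightarrow> x < y \<Longrightarrow> 0 < Phi t x v"
    "\<And>x. y < x \<Longrightarrow> x < u \<Longrightarrow> Phi t x v < 0"
    "\<And>x. u < x \<Longrightarrow> x < 1 \<Longrightarrow> 0 < Phi t x v"
proof -
  have uv: "0 < v" "u < 1" "Phi t u v = 0" using s by (auto simp: solution_def)
  have Pc: "0 < Phi t c v" using y uv vc by (intro Phi_pos_before_two_zeros[of c y u]) auto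
  show "0 < Phi t x v" if "v \<le> x" "x < y" for x
  proof (cases "c \<le> x")
    case True
    then show ?thesis using that y uv vc by (intro Phi_pos_before_two_zeros[of x y u]) auto
  next
    case False
    then show ?thesis using Phi_strict_antimono[OF t uv(1) that(1), of c] Pc by simp
  qed
  show "Phi t x v < 0" if "y < x" "x < u" for x
    using that y uv vc by (intro Phi_neg_before_zero[of y x u]) auto
  show "0 < Phi t x v" if "u < x" "x < 1" for x
    using that y uv vc by (intro Phi_pos_after_zero[of y u x]) auto
qed

lemma solution_Phi_signs:
  assumes t: "T0 \<le> t" and s: "solution t u v"
  obtains y where "v < y" "y < u" "v < c" "c < u"
    "\<And>x. v \<le> x \<Longrightarrow> x < y \<Longrightarrow> 0 < Phi t x v"
    "\<And>x. y < x \<Longrightarrow> x < u \<Longrightarrow> Phi t x v < 0"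
    "\<And>x. u < x \<Longrightarrow> x < 1 \<Longrightarrow> 0 < Phi t x v"
proof -
  obtain y where y: "v < y" "y < u" "Phi t y v = 0"
    using s by (auto simp: solution_def elim: Phi_zero_between_if_E_zero)
  have vc: "v < c" and cu: "c < u"
    using solution_v_lt_c[OF t s y] solution_c_lt_u[OF t s y] .
  show ?thesis
  proof (cases "y \<le> c")
    case True
    from that[OF y(1,2) vc cu Phi_signs_if_first_zero_le_c[OF t s y True vc cu]] show ?thesis .
  next
    case False
    from that[OF y(1,2) vc cu Phi_signs_if_first_zero_gt_c[OF t s y _ vc]] False show ?thesis by simp
  qed
qed

lemma solution_v_lt_c_lt_u:
  assumes "T0 \<le> t" "solution t u v"
  shows "v < c" "c < u"
proof -
  obtain y where "v < y" "y < u" "Phi t y v = 0"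
    using assms(2) by (auto simp: solution_def elim: Phi_zero_between_if_E_zero)
  then show "v < c" "c < u" using solution_v_lt_c[OF assms] solution_c_lt_u[OF assms] by auto
qed

lemma solution_h_pos:
  assumes "T0 \<le> t" "solution t u v"
  shows "0 < h t v"
proof -
  obtain y where y: "v < y" "y < u" "v < c" "c < u"
    and P: "\<And>x. v \<le> x \<Longrightarrow> x < y \<Longrightarrow> 0 < Phi t x v"
      "\<And>x. y < x \<Longrightarrow> x < u \<Longrightarrow> Phi t x v < 0"
      "\<And>x. u < x \<Longrightarrow> x < 1 \<Longrightarrow> 0 < Phi t x v"
    by (rule solution_Phi_signs[OF assms]) (rule that; blast)
  have "0 < Phi t v v" using P(1)[of v] y by simp
  moreover have "0 < v" "v < 1" using assms(2) by (auto simp: solution_def)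
  ultimately show ?thesis using Phi_diag[of v t] by simp
qed

lemma solution_E_pos:
  assumes "T0 \<le> t" and s: "solution t u v" and x: "v < x" "x < 1" "x \<noteq> u"
  shows "0 < E t x v"
proof -
  obtain y where y: "v < y" "y < u" "v < c" "c < u"
    and P: "\<And>x. v \<le> x \<Longrightarrow> x < y \<Longrightarrow> 0 < Phi t x v"
      "\<And>x. y < x \<Longrightarrow> x < u \<Longrightarrow> Phi t x v < 0"
      "\<And>x. u < x \<Longrightarrow> x < 1 \<Longrightarrow> 0 < Phi t x v"
    by (rule solution_Phi_signs[OF assms(1,2)]) (rule that; blast)
  have uv: "0 < v" "v < u" "u < 1" "E t u v = 0" using s by (auto simp: solution_def)
  show ?thesis
  proof (cases "x < y")
    case True
    then show ?thesis using E_strict_mono_if_Phi_pos[of v v x t] x uv P(1) E_diag by simp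
  next
    case False
    show ?thesis
    proof (cases "x < u")
      case True
      then show ?thesis using E_strict_antimono_if_Phi_neg[of v x u t] False x uv P(2) by simp
    next
      case False
      then show ?thesis using E_strict_mono_if_Phi_pos[of v u x t] x uv P(3) by simp
    qed
  qed
qed

lemma E_strict_antimono_v:
  assumes t: "T0 \<le> t" and w: "0 < w1" "w1 < w2" "w2 < x" "x < 1" "w2 \<le> c" and hw: "0 < h t w2"
  shows "E t x w2 < E t x w1"
proof (rule DERIV_neg_imp_decreasing[OF w(2)])
  fix w assume ww: "w1 \<le> w" "w \<le> w2"
  have "0 < h t w" using h_strict_antimono[OF t, of w w2] ww w hw by (cases "w = w2") auto
  then show "\<exists>y. ((\<lambda>v. E t x v) has_real_derivative y) (at w) \<and> y < 0"
    using ww w E_has_derivative_v[of w x t] by (intro exI[of _ "- sqrt (x - w) * h t w"]) auto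
qed

lemma solution_unique_of_le:
  assumes t: "T0 \<le> t" and s: "solution t u v" and s': "solution t u' v'" and vv: "v \<le> v'"
  shows "u = u' \<and> v = v'"
proof (cases "v = v'")
  case True
  then show ?thesis
    using solution_E_pos[OF t s, of u'] s s' by (auto simp: solution_def)
next
  case False
  have v'c: "v' < c" and cu: "c < u"
    using solution_v_lt_c_lt_u[OF t s'] solution_v_lt_c_lt_u[OF t s] by auto
  have "E t u v' < E t u v"
    using s vv False v'c cu solution_h_pos[OF t s'] by (intro E_strict_antimono_v[OF t]) (auto simp: solution_def)
  moreover have "0 \<le> E t u v'"
    using solution_E_pos[OF t s', of u] v'c cu s s' by (cases "u = u'") (auto simp: solution_def)
  ultimately show ?thesis using s by (simp add: solution_def)
qed

lemma solution_unique:
  assumes "T0 \<le> t" "solution t u v" "solution t u' v'"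
  shows "u = u' \<and> v = v'"
  using solution_unique_of_le[OF assms] solution_unique_of_le[OF assms(1,3,2)] by (cases "v \<le> v'") auto

end

context solution_regime
begin

lemma Ep_le_5:
  assumes "0 < v" "v < x" "x < 1"
  shows "Ep x v \<le> 5"
proof -
  have "(x - v) * sqrt (x - v) \<le> 1 * 1" using assms by (intro mult_mono) auto
  then have "(x - v) * sqrt (x - v) * (2 * x + 3 * v) \<le> 1 * 5" using assms by (intro mult_mono) auto
  then show ?thesis by (simp add: Ep_def)
qed

lemma E_pos_for_small_v:
  assumes "0 < t"
  obtains v1 where "0 < v1" "v1 < c / 2" "\<And>x. c \<le> x \<Longrightarrow> x < 1 \<Longrightarrow> 0 < E t x v1"
proof -
  define K where "K = f (3 * c / 4) + 80 * t / sqrt (c / 2)"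
  obtain a where a: "0 < a" "\<And>x. 0 < x \<Longrightarrow> x < a \<Longrightarrow> K < f x" using f_at_0[of K] by blast
  define v1 where "v1 = min a (c / 2) / 2"
  have v1: "0 < v1" "v1 < c / 2" "K < f v1" using a c_bounds by (auto simp: v1_def)
  have "0 < E t x v1" if x: "c \<le> x" "x < 1" for x
  proof -
    have xv: "0 < v1" "v1 < x" "x < 1" using v1 x by auto
    have "interp x v1 (1/2) = (3 * x + v1) / 4" by (simp add: interp_def power2_eq_square field_simps)
    then have "f (interp x v1 (1/2)) \<le> f (3 * c / 4)" using x xv c_bounds by (intro f_antimono) auto
    then have gap: "80 * t / sqrt (c / 2) < f v1 - f (interp x v1 (1/2))" using v1 by (simp add: K_def)
    have sq: "0 < sqrt (c / 2)" "sqrt (c / 2) \<le> sqrt (x - v1)"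
      using x v1 c_bounds by (auto intro: real_sqrt_le_mono)
    have "40 * t = sqrt (c / 2) * (1/2) * (80 * t / sqrt (c / 2))" using sq by simp
    also have "\<dots> < sqrt (x - v1) * (1/2) * (f v1 - f (interp x v1 (1/2)))"
      using sq gap assms by (intro mult_le_less_imp_less) auto
    also have "\<dots> \<le> Eg x v1" by (rule Eg_lower[OF xv]) auto
    finally have "40 * t < Eg x v1" .
    moreover have "8 * t * Ep x v1 \<le> 8 * t * 5" using Ep_le_5[OF xv] assms by (intro mult_left_mono) auto
    ultimately show ?thesis by (simp add: E_def)
  qed
  then show ?thesis using that v1 by blast
qed

lemma Phi_pos_near_1:
  assumes "0 < t"
  obtains b where "c < b" "b < 1" "\<And>x v. b \<le> x \<Longrightarrow> x < 1 \<Longrightarrow> 0 < v \<Longrightarrow> v \<le> c / 2 \<Longrightarrow> 0 < Phi t x v"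
proof -
  obtain b0 where b0: "b0 < 1" "\<And>x. b0 < x \<Longrightarrow> x < 1 \<Longrightarrow> f x < f (c / 2) - 120 * t"
    using f_at_1[of "f (c / 2) - 120 * t"] by blast
  define b where "b = (max c b0 + 1) / 2"
  have b: "c < b" "b < 1" "b0 < b" using b0 c_lt by (auto simp: b_def)
  have "0 < Phi t x v" if x: "b \<le> x" "x < 1" and v: "0 < v" "v \<le> c / 2" for x v
  proof -
    have xv: "0 < v" "v < x" "x < 1" using x v b c_bounds by auto
    have "f (c / 2) \<le> f v" using v c_bounds c_lt by (intro f_antimono) auto
    then have gap: "120 * t < f v - f x" using b0(2)[of x] x b by simp
    then have "60 * t < (f v - f x) / 2" by simp
    also have "\<dots> \<le> (f v - f x) / (2 * (x - v))" using xv gap assms by (intro divide_left_mono) auto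
    also have "\<dots> \<le> A x v" by (rule A_lower[OF xv])
    finally have "60 * t < A x v" .
    moreover have "20 * t * (2 * x + v) \<le> 20 * t * 3" using xv assms by (intro mult_left_mono) auto
    ultimately show ?thesis by (simp add: Phi_def)
  qed
  then show ?thesis using that b by blast
qed

lemma E_attains_min:
  assumes "0 < v" "v < 1" "c \<le> b" "b < 1"
  shows "\<exists>x0\<in>{c..b}. E t x0 v = Inf ((\<lambda>x. E t x v) ` {c..b}) \<and> (\<forall>x\<in>{c..b}. E t x0 v \<le> E t x v)"
proof -
  have "continuous_on {c..b} (\<lambda>x. E t x v)"
    by (rule continuous_on_subset[OF continuous_on_E]) (use assms c_bounds in auto)
  moreover have "{c..b} \<noteq> {}" using assms by simp
  ultimately obtain x0 where x0: "x0 \<in> {c..b}" "\<And>x. x \<in> {c..b} \<Longrightarrow> E t x0 v \<le> E t x v"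
    using continuous_attains_inf[OF compact_Icc] by blast
  moreover have "Inf ((\<lambda>x. E t x v) ` {c..b}) = E t x0 v"
    by (rule cInf_eq_minimum) (use x0 in auto)
  ultimately show ?thesis by auto
qed

lemma E_min_not_at_right_end:
  assumes "0 < v" "v < c" "c < b" "b < 1" "0 < Phi t b v"
    and min: "\<And>x. x \<in> {c..b} \<Longrightarrow> E t b v \<le> E t x v"
  shows False
proof -
  have "((\<lambda>x. E t x v) has_real_derivative sqrt (b - v) * Phi t b v) (at b)"
    using assms c_bounds by (intro E_has_derivative_x) auto
  moreover have "0 < sqrt (b - v) * Phi t b v" using assms by simp
  ultimately obtain d where d: "0 < d" "\<And>h. 0 < h \<Longrightarrow> h < d \<Longrightarrow> E t (b - h) v < E t b v"
    using DERIV_pos_inc_left by blast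
  define h where "h = min (d / 2) (b - c)"
  have "0 < h" "h < d" "b - h \<in> {c..b}" using d assms by (auto simp: h_def min_def)
  then show False using d(2) min by fastforce
qed

lemma E_min_not_at_c:
  assumes t: "T0 \<le> t" and v: "0 < v" "v < c" and b: "c < b" "b < 1" and E0: "E t c v = 0"
    and min: "\<And>x. x \<in> {c..b} \<Longrightarrow> E t c v \<le> E t x v"
  shows False
proof -
  obtain y where y: "v < y" "y < c" "Phi t y v = 0"
    using Phi_zero_between_if_E_zero[of v c t] v c_bounds c_lt E0 by blast
  have "Phi t c v < 0" using Phi_strict_antimono[OF t v(1), of y c] y by simp
  then have "((\<lambda>x. E t x v) has_real_derivative sqrt (c - v) * Phi t c v) (at c)"
    "sqrt (c - v) * Phi t c v < 0"
    using v c_bounds c_lt by (auto intro!: E_has_derivative_x simp: mult_pos_neg)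
  then obtain d where d: "0 < d" "\<And>h. 0 < h \<Longrightarrow> h < d \<Longrightarrow> E t (c + h) v < E t c v"
    using DERIV_neg_dec_right by blast
  define h where "h = min (d / 2) (b - c)"
  have "0 < h" "h < d" "c + h \<in> {c..b}" using d b by (auto simp: h_def min_def)
  then show False using d(2) min by fastforce
qed

lemma solution_at_interior_zero_min:
  assumes v: "0 < v" "v < c" and x: "c < x0" "x0 < b" "b < 1" and E0: "E t x0 v = 0"
    and min: "\<And>x. x \<in> {c..b} \<Longrightarrow> 0 \<le> E t x v"
  shows "solution t x0 v"
proof -
  have "sqrt (x0 - v) * Phi t x0 v = 0"
  proof (rule DERIV_local_min[of "\<lambda>x. E t x v"])
    show "((\<lambda>x. E t x v) has_real_derivative sqrt (x0 - v) * Phi t x0 v) (at x0)"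
      using v x by (intro E_has_derivative_x) auto
    show "0 < min (x0 - c) (b - x0)" using x by simp
    show "\<forall>y. \<bar>x0 - y\<bar> < min (x0 - c) (b - x0) \<longrightarrow> E t x0 v \<le> E t y v"
      using min E0 by (auto simp: abs_less_iff)
  qed
  then show ?thesis using v x E0 by (simp add: solution_def)
qed

end

context solution_regime
begin

lemma solution_exists_for_t:
  assumes t: "T0 \<le> t" and Ec: "E t c (c / 2) < 0"
  shows "\<exists>u v. solution t u v"
proof -
  have tp: "0 < t" using t T0_pos by simp
  obtain v1 where v1: "0 < v1" "v1 < c / 2" "\<And>x. c \<le> x \<Longrightarrow> x < 1 \<Longrightarrow> 0 < E t x v1"
    using E_pos_for_small_v[OF tp] by blast
  obtain b where b: "c < b" "b < 1" "\<And>x v. b \<le> x \<Longrightarrow> x < 1 \<Longrightarrow> 0 < v \<Longrightarrow> v \<le> c / 2 \<Longrightarrow> 0 < Phi t x v"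
    using Phi_pos_near_1[OF tp] by blast
  define m where "m = (\<lambda>v. Inf ((\<lambda>x. E t x v) ` {c..b}))"
  have cm: "continuous_on {v1..c / 2} m"
    unfolding m_def using b v1 c_bounds c_lt
    by (intro continuous_on_Inf_compact_param continuous_on_subset[OF continuous_on_E_pair]) auto
  obtain x1 where x1: "x1 \<in> {c..b}" "E t x1 v1 = m v1"
    using E_attains_min[of v1 b t] v1 b c_bounds c_lt unfolding m_def by auto
  have "0 < E t x1 v1" using v1(3)[of x1] x1(1) b(2) by simp
  then have m1: "0 < m v1" using x1(2) by simp
  obtain x2 where x2: "E t x2 (c / 2) = m (c / 2)" "\<forall>x\<in>{c..b}. E t x2 (c / 2) \<le> E t x (c / 2)"
    using E_attains_min[of "c / 2" b t] b c_bounds c_lt unfolding m_def by auto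
  have "E t x2 (c / 2) \<le> E t c (c / 2)" using x2(2) b(1) by simp
  then have m2: "m (c / 2) < 0" using Ec x2(1) by simp
  have "\<exists>v0\<ge>v1. v0 \<le> c / 2 \<and> m v0 = 0"
    by (rule IVT2'[OF _ _ _ cm]) (use m1 m2 v1 in auto)
  then obtain v0 where v0: "v1 \<le> v0" "v0 \<le> c / 2" "m v0 = 0" by blast
  have v0': "0 < v0" "v0 < c" "v0 < 1" using v0 v1 c_bounds c_lt by auto
  obtain x0 where x0: "x0 \<in> {c..b}" "E t x0 v0 = 0" "\<forall>x\<in>{c..b}. E t x0 v0 \<le> E t x v0"
    using E_attains_min[of v0 b t] v0' b v0(3) unfolding m_def by auto
  have "x0 \<noteq> b"
  proof
    assume "x0 = b"
    then show False
      using E_min_not_at_right_end[OF v0'(1,2) b(1,2) b(3)[OF order_refl b(2) v0'(1) v0(2)]] x0(3) by simp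
  qed
  moreover have "x0 \<noteq> c"
  proof
    assume "x0 = c"
    then show False using E_min_not_at_c[OF t v0'(1,2) b(1,2)] x0 by simp
  qed
  ultimately have "solution t x0 v0"
    using x0 v0' b by (intro solution_at_interior_zero_min) auto
  then show ?thesis by blast
qed

lemma solution_exists: "\<exists>T1\<ge>T0. \<forall>t\<ge>T1. \<exists>u v. solution t u v"
proof -
  define T1 where "T1 = max T0 (Eg c (c / 2) / (8 * Ep c (c / 2)) + 1)"
  have Ep: "0 < Ep c (c / 2)" using c_bounds by (intro Ep_pos) auto
  have "\<exists>u v. solution t u v" if t: "T1 \<le> t" for t
  proof (rule solution_exists_for_t)
    show "T0 \<le> t" using t by (simp add: T1_def)
    have "Eg c (c / 2) / (8 * Ep c (c / 2)) < t" using t by (simp add: T1_def)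
    then have "Eg c (c / 2) < t * (8 * Ep c (c / 2))" using Ep by (simp add: pos_divide_less_eq)
    then show "E t c (c / 2) < 0" by (simp add: E_def algebra_simps)
  qed
  moreover have "T0 \<le> T1" by (simp add: T1_def)
  ultimately show ?thesis by blast
qed

end

context solution_regime
begin

lemma solution_v_strict_antimono_t:
  assumes t: "T0 \<le> t" "t < t'" and s: "solution t u v" and s': "solution t' u' v'"
  shows "v' < v"
proof (rule ccontr)
  assume "\<not> v' < v"
  have t': "T0 \<le> t'" using t by simp
  have su: "0 < v" "v < u" "u < 1" "E t u v = 0" using s by (auto simp: solution_def)
  have cu: "c < u" and v'c: "v' < c"
    using solution_v_lt_c_lt_u[OF t(1) s] solution_v_lt_c_lt_u[OF t' s'] by auto
  have "0 \<le> E t' u v'"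
    using solution_E_pos[OF t' s', of u] s' v'c cu su by (cases "u = u'") (auto simp: solution_def)
  moreover have "E t' u v' \<le> E t' u v"
  proof (cases "v = v'")
    case False
    then have "v < v'" using \<open>\<not> v' < v\<close> by simp
    then show ?thesis
      using E_strict_antimono_v[OF t' su(1) _ _ su(3) _ solution_h_pos[OF t' s']] v'c cu by simp
  qed simp
  moreover have "E t' u v < E t u v" using Ep_pos[of v u] t su by (simp add: E_def)
  ultimately show False using su by simp
qed

lemma solution_v_small:
  assumes "0 < \<eta>"
  shows "\<exists>T\<ge>T0. \<forall>t u v. T \<le> t \<longrightarrow> solution t u v \<longrightarrow> v < \<eta>"
proof -
  define e where "e = min \<eta> (c / 2)"
  have e: "0 < e" "e \<le> \<eta>" "e < c" using assms c_bounds by (auto simp: e_def)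
  have "continuous_on {e..c} g" by (rule continuous_on_subset[OF continuous_on_g]) (use e c_lt in auto)
  moreover have "{e..c} \<noteq> {}" using e by auto
  ultimately obtain m where m: "\<And>y. y \<in> {e..c} \<Longrightarrow> g y \<le> g m"
    using continuous_attains_sup[OF compact_Icc] by blast
  show ?thesis
  proof (intro exI[of _ "max T0 (g m / (60 * e) + 1)"] conjI allI impI)
    fix t u v assume t: "max T0 (g m / (60 * e) + 1) \<le> t" and s: "solution t u v"
    show "v < \<eta>"
    proof (rule ccontr)
      assume "\<not> v < \<eta>"
      then have ve: "e \<le> v" using e by simp
      have t0: "T0 \<le> t" using t by simp
      have "60 * t * v < g v" using solution_h_pos[OF t0 s] by (simp add: h_def)
      moreover have "g v \<le> g m" using m[of v] ve solution_v_lt_c_lt_u[OF t0 s] by simp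
      moreover have "60 * t * e \<le> 60 * t * v" using ve t0 T0_pos by (intro mult_left_mono) auto
      ultimately have "t * (60 * e) < g m" by linarith
      then have "t < g m / (60 * e)" using e by (simp add: pos_less_divide_eq)
      then show False using t by simp
    qed
  qed simp
qed

end

section \<open>Dependence of the solution on \<open>t\<close>\<close>

lemma R_bracket_bound:
  fixes u v d B X f1 fk :: real
  assumes u: "1/2 < u" "u < 1" and v: "0 < v" "v \<le> u / 2" and d: "0 < d" "d \<le> 1"
    and B: "0 \<le> B" and X: "0 \<le> X"
  shows "2 * B * d * (2 * u + 3 * v) + 10 / 9 * (X - f1) * (2 * u + 3 * v) - 9 / 2 * (X - fk) * (2 * u + v)
    \<le> 10 * B - 3 * X + 6 * \<bar>f1\<bar> + 14 * \<bar>fk\<bar>"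
proof -
  define a where "a = 2 * u + 3 * v"
  define b where "b = 2 * u + v"
  have ab: "0 \<le> a" "a \<le> 5" "0 \<le> b" "b \<le> 3" "10 / 9 * a - 9 / 2 * b \<le> - 3"
    using u v by (auto simp: a_def b_def field_simps)
  have "2 * B * d * a + 10 / 9 * (X - f1) * a - 9 / 2 * (X - fk) * b
      = 2 * (B * d * a) + X * (10 / 9 * a - 9 / 2 * b) + 10 / 9 * (- f1 * a) + 9 / 2 * (fk * b)"
    by (simp add: field_simps)
  also have "\<dots> \<le> 2 * (B * 1 * 5) + X * (- 3) + 10 / 9 * (\<bar>f1\<bar> * 5) + 9 / 2 * (\<bar>fk\<bar> * 3)"
    using ab d B X abs_ge_minus_self[of f1] abs_ge_self[of fk]
    by (intro add_mono mult_left_mono mult_mono) auto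
  finally show ?thesis unfolding a_def b_def by simp
qed

context solution_regime
begin

text \<open>Eliminating \<open>t\<close> from \<open>Phi t x v = 0\<close> and \<open>E t x v = 0\<close> gives \<open>R x v = 0\<close>.\<close>

definition R :: "real \<Rightarrow> real \<Rightarrow> real" where "R x v = 2 * A x v * Ep x v - 5 * Eg x v * (2 * x + v)"

lemma R_of_solution: "solution t u v \<Longrightarrow> R u v = 0"
  by (simp add: solution_def Phi_def E_def R_def)

text \<open>Splitting the integrals at \<open>s = 9 / 10\<close> keeps \<open>interp u v s\<close> in \<open>[19 c / 100, 1 - \<eta>]\<close>,
  where \<open>g\<close> is bounded by \<open>B\<close>.\<close>

lemma R_upper:
  assumes \<eta>: "0 < \<eta>" and u: "c \<le> u" "u \<le> 1 - \<eta>" and v: "0 < v" "v \<le> c / 2"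
    and B: "0 \<le> B" "\<And>y. c * (19 / 100) \<le> y \<Longrightarrow> y \<le> 1 - \<eta> \<Longrightarrow> g y \<le> B" and X: "0 \<le> f v"
  shows "R u v \<le> sqrt (u - v) * (10 * B - 3 * f v + 6 * \<bar>f (1 - \<eta>)\<bar> + 14 * \<bar>f (c * (19 / 100))\<bar>)"
proof -
  define d where "d = u - v"
  define f1 where "f1 = f (1 - \<eta>)"
  define fk where "fk = f (c * (19 / 100))"
  have d: "c / 2 \<le> d" "d \<le> 1" "0 < d" "d < u" using u v c_bounds \<eta> by (auto simp: d_def)
  have uv: "0 < v" "v < u" "u < 1" using u v c_bounds \<eta> by auto
  have p0: "interp u v (9 / 10) = u - 81 / 100 * d" by (simp add: interp_def d_def power2_eq_square)
  have p0_bounds: "c * (19 / 100) \<le> interp u v (9 / 10)" "interp u v (9 / 10) \<le> 1 - \<eta>"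
    using u d c_bounds unfolding p0 by auto
  have "g (interp u v s) \<le> B" if "0 \<le> s" "s \<le> 9 / 10" for s
  proof (rule B(2))
    have "s\<^sup>2 * d \<le> (9 / 10)\<^sup>2 * d" using that d by (intro mult_right_mono power_mono) auto
    then show "c * (19 / 100) \<le> interp u v s" using p0_bounds by (simp add: p0 interp_def d_def)
    show "interp u v s \<le> 1 - \<eta>" using interp_between[of v u s] that uv u by simp
  qed
  then have "A u v \<le> B + (f v - f (interp u v (9 / 10))) / (2 * (9 / 10) * d)"
    using A_upper[OF uv, of "9 / 10" B] B(1) by (simp add: d_def)
  also have "\<dots> \<le> B + (f v - f1) / (2 * (9 / 10) * d)"
    using f_antimono[of "interp u v (9 / 10)" "1 - \<eta>"] p0_bounds c_bounds \<eta> d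
    by (intro add_left_mono divide_right_mono) (auto simp: f1_def)
  finally have hA: "A u v \<le> B + (f v - f1) / (2 * (9 / 10) * d)" .
  have "sqrt d * (9 / 10) * (f v - fk) \<le> sqrt d * (9 / 10) * (f v - f (interp u v (9 / 10)))"
    using f_antimono[of "c * (19 / 100)" "interp u v (9 / 10)"] p0_bounds c_bounds \<eta> d
    by (intro mult_left_mono) (auto simp: fk_def)
  also have "\<dots> \<le> Eg u v" using Eg_lower[OF uv, of "9 / 10"] by (simp add: d_def)
  finally have hG: "sqrt d * (9 / 10) * (f v - fk) \<le> Eg u v" .
  have hP: "Ep u v = d * sqrt d * (2 * u + 3 * v)" "0 < Ep u v" using uv by (simp_all add: Ep_def d_def)
  have "R u v \<le> 2 * (B + (f v - f1) / (2 * (9 / 10) * d)) * Ep u v - 5 * (sqrt d * (9 / 10) * (f v - fk)) * (2 * u + v)"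
    unfolding R_def using hA hG hP(2) uv by (intro diff_mono mult_right_mono mult_left_mono) auto
  also have "\<dots> = sqrt d * (2 * B * d * (2 * u + 3 * v) + 10 / 9 * (f v - f1) * (2 * u + 3 * v)
      - 9 / 2 * (f v - fk) * (2 * u + v))"
    using d unfolding hP(1) by (simp add: field_simps)
  also have "\<dots> \<le> sqrt d * (10 * B - 3 * f v + 6 * \<bar>f1\<bar> + 14 * \<bar>fk\<bar>)"
    using u v d c_bounds B(1) X \<eta> by (intro mult_left_mono R_bracket_bound) auto
  finally show ?thesis by (simp add: d_def f1_def fk_def)
qed

lemma R_neg_if_f_large:
  assumes \<eta>: "0 < \<eta>" "\<eta> \<le> 1 - c"
  obtains C where "\<And>u v. c \<le> u \<Longrightarrow> u \<le> 1 - \<eta> \<Longrightarrow> 0 < v \<Longrightarrow> v \<le> c / 2 \<Longrightarrow> C < f v \<Longrightarrow> R u v < 0"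
proof -
  have "continuous_on {c * (19 / 100)..1 - \<eta>} g"
    by (rule continuous_on_subset[OF continuous_on_g]) (use c_bounds \<eta> in auto)
  moreover have "{c * (19 / 100)..1 - \<eta>} \<noteq> {}" using c_bounds \<eta> by auto
  ultimately obtain m where m: "\<And>y. y \<in> {c * (19 / 100)..1 - \<eta>} \<Longrightarrow> g y \<le> g m"
    using continuous_attains_sup[OF compact_Icc] by blast
  define B where "B = max 0 (g m)"
  have B: "0 \<le> B" "\<And>y. c * (19 / 100) \<le> y \<Longrightarrow> y \<le> 1 - \<eta> \<Longrightarrow> g y \<le> B"
    using m by (auto simp: B_def le_max_iff_disj)
  define C where "C = max 0 ((10 * B + 6 * \<bar>f (1 - \<eta>)\<bar> + 14 * \<bar>f (c * (19 / 100))\<bar>) / 3)"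
  have "R u v < 0" if u: "c \<le> u" "u \<le> 1 - \<eta>" and v: "0 < v" "v \<le> c / 2" and X: "C < f v" for u v
  proof -
    have "10 * B - 3 * f v + 6 * \<bar>f (1 - \<eta>)\<bar> + 14 * \<bar>f (c * (19 / 100))\<bar> < 0"
      using X by (simp add: C_def)
    moreover have "0 < sqrt (u - v)" using u v c_bounds by simp
    ultimately have "sqrt (u - v) * (10 * B - 3 * f v + 6 * \<bar>f (1 - \<eta>)\<bar> + 14 * \<bar>f (c * (19 / 100))\<bar>) < 0"
      by (simp add: mult_pos_neg)
    moreover have "0 \<le> f v" using X by (simp add: C_def)
    ultimately show ?thesis using R_upper[OF \<eta>(1) u v B] by linarith
  qed
  then show ?thesis using that by blast
qed

lemma solution_u_near_1:
  assumes "0 < \<eta>"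
  shows "\<exists>T\<ge>T0. \<forall>t u v. T \<le> t \<longrightarrow> solution t u v \<longrightarrow> 1 - \<eta> < u"
proof (cases "\<eta> \<le> 1 - c")
  case False
  then show ?thesis using solution_v_lt_c_lt_u by (intro exI[of _ T0]) force
next
  case True
  obtain C where C: "\<And>u v. c \<le> u \<Longrightarrow> u \<le> 1 - \<eta> \<Longrightarrow> 0 < v \<Longrightarrow> v \<le> c / 2 \<Longrightarrow> C < f v \<Longrightarrow> R u v < 0"
    using R_neg_if_f_large[OF assms True] by blast
  obtain a where a: "0 < a" "\<And>x. 0 < x \<Longrightarrow> x < a \<Longrightarrow> C < f x" using f_at_0[of C] by blast
  obtain T where T: "T0 \<le> T" "\<And>t u v. T \<le> t \<Longrightarrow> solution t u v \<Longrightarrow> v < min a (c / 2)"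
    using solution_v_small[of "min a (c / 2)"] a c_bounds by auto
  have "1 - \<eta> < u" if t: "T \<le> t" and s: "solution t u v" for t u v
  proof (rule ccontr)
    assume "\<not> 1 - \<eta> < u"
    moreover have "0 < v" using s by (simp add: solution_def)
    moreover have "c < u" using solution_v_lt_c_lt_u[OF _ s] t T(1) by simp
    ultimately have "R u v < 0" using T(2)[OF t s] a(2)[of v] by (intro C) auto
    then show False using R_of_solution[OF s] by simp
  qed
  then show ?thesis using T(1) by blast
qed

end

lemma R_derivative_identity:
  fixes x w r a b P G :: real
  assumes r: "0 < r" "x = r\<^sup>2 + w" and w: "0 < w" and P: "P = r\<^sup>2 * r * (2 * x + 3 * w)"
    and G: "5 * G * (2 * x + w) = 2 * a * P"
  shows "2 * ((a - b) / (2 * (x - w))) * P + - 15 / 2 * w * r * (2 * a) - (5 * (- r * b) * (2 * x + w) + 1 * (5 * G))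
    = 2 * r * (4 * x + w) * (b - 3 * w * a / (2 * x + w))"
proof -
  define D where "D = 2 * x + w"
  define q where "q = (a - b) / (2 * (x - w))"
  have D: "0 < D" using r w by (simp add: D_def add_pos_pos)
  have a: "a = b + 2 * r\<^sup>2 * q" using r by (simp add: q_def field_simps)
  have "(2 * q * P + - 15 / 2 * w * r * (2 * a) - (5 * (- r * b) * D + 1 * (5 * G))) * D
      = 2 * q * P * D - 15 * w * r * a * D + 5 * r * b * D * D - 5 * G * D"
    by (simp add: algebra_simps)
  also have "\<dots> = 2 * r * (4 * x + w) * (b * D - 3 * w * a)"
    using G unfolding a P D_def r(2) by (simp add: algebra_simps power2_eq_square power3_eq_cube)
  also have "\<dots> = (2 * r * (4 * x + w) * (b - 3 * w * a / D)) * D"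
    using D by (simp add: algebra_simps)
  finally show ?thesis using D by (simp add: q_def D_def)
qed

context solution_regime
begin

definition tau :: "real \<Rightarrow> real \<Rightarrow> real" where "tau x v = Eg x v / (8 * Ep x v)"

lemma solution_at_tau:
  assumes "0 < w" "w < x" "x < 1" "R x w = 0"
  shows "solution (tau x w) x w" "tau x w = A x w / (20 * (2 * x + w))"
proof -
  have "0 < Ep x w" "0 < 2 * x + w" using assms by (auto intro: Ep_pos)
  then show "tau x w = A x w / (20 * (2 * x + w))" using assms(4) by (simp add: tau_def R_def field_simps)
  then have "Phi (tau x w) x w = 0" using \<open>0 < 2 * x + w\<close> by (simp add: Phi_def field_simps)
  moreover have "E (tau x w) x w = 0" using \<open>0 < Ep x w\<close> by (simp add: E_def tau_def)
  ultimately show "solution (tau x w) x w" using assms by (simp add: solution_def)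
qed

lemma R_has_derivative_v:
  assumes "0 < w" "w < x" "x < 1" "R x w = 0"
  shows "((\<lambda>w. R x w) has_real_derivative
    2 * sqrt (x - w) * (4 * x + w) * (g w - 3 * w * A x w / (2 * x + w))) (at w)"
proof -
  have d: "((\<lambda>w. R x w) has_real_derivative
      2 * ((A x w - g w) / (2 * (x - w))) * Ep x w + - 15 / 2 * w * sqrt (x - w) * (2 * A x w)
      - (5 * (- sqrt (x - w) * g w) * (2 * x + w) + 1 * (5 * Eg x w))) (at w)"
    unfolding R_def using assms
    by (intro DERIV_diff DERIV_mult DERIV_cmult A_has_derivative_v Ep_has_derivative_v Eg_has_derivative_v
        DERIV_add[OF DERIV_const DERIV_ident, THEN DERIV_cong]) auto
  define r where "r = sqrt (x - w)"
  have r: "0 < r" "x = r\<^sup>2 + w" using assms by (auto simp: r_def)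
  have Ep: "Ep x w = r\<^sup>2 * r * (2 * x + 3 * w)" using assms by (simp add: Ep_def r_def)
  have G: "5 * Eg x w * (2 * x + w) = 2 * A x w * Ep x w" using assms(4) by (simp add: R_def)
  from R_derivative_identity[OF r assms(1) Ep G] show ?thesis
    unfolding r_def by (rule DERIV_cong[OF d])
qed

lemma tau_has_derivative_x:
  assumes "0 < v" "v < x" "x < 1"
  shows "((\<lambda>x. tau x v) has_real_derivative sqrt (x - v) * R x v / (16 * (Ep x v)\<^sup>2)) (at x)"
proof -
  have P0: "Ep x v \<noteq> 0" using Ep_pos[of v x] assms by simp
  have "((\<lambda>x. Eg x v / (8 * Ep x v)) has_real_derivative
      (sqrt (x - v) * A x v * (8 * Ep x v) - Eg x v * (8 * (5 / 2 * sqrt (x - v) * (2 * x + v))))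
        / ((8 * Ep x v) * (8 * Ep x v))) (at x)"
    using P0 assms by (intro DERIV_divide Eg_has_derivative_x DERIV_cmult Ep_has_derivative_x) auto
  then show ?thesis unfolding tau_def
    by (rule DERIV_cong) (use P0 in \<open>simp add: R_def field_simps power2_eq_square\<close>)
qed

lemma continuous_on_R_v:
  assumes "0 < a" "b < x" "x < 1"
  shows "continuous_on {a..b} (\<lambda>w. R x w)"
proof (intro continuous_at_imp_continuous_on ballI)
  fix w assume "w \<in> {a..b}"
  then have w: "0 < w" "w < x" "w < 1" using assms by auto
  show "isCont (\<lambda>w. R x w) w" unfolding R_def
    using w assms A_has_derivative_v[of x w] Ep_has_derivative_v[of w x] Eg_has_derivative_v[of w x]
    by (intro continuous_intros DERIV_isCont) auto
qed

end

context solution_regime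
begin

lemma Ep_lower:
  assumes "c / 2 \<le> x - v" "c \<le> x" "0 < v"
  shows "c / 2 * sqrt (c / 2) * (2 * c) \<le> Ep x v"
proof -
  have "c / 2 * sqrt (c / 2) \<le> (x - v) * sqrt (x - v)"
    using assms c_bounds by (intro mult_mono real_sqrt_le_mono) auto
  then show ?thesis unfolding Ep_def using assms c_bounds by (intro mult_mono) auto
qed

lemma solution_f_gap:
  "\<exists>T\<ge>T0. \<forall>t u v. T \<le> t \<longrightarrow> solution t u v \<longrightarrow> v < c / 2 \<and> 120 * T0 \<le> f v - f u"
proof -
  obtain Tv where Tv: "T0 \<le> Tv" "\<And>t u v. Tv \<le> t \<Longrightarrow> solution t u v \<Longrightarrow> v < c / 2"
    using solution_v_small[of "c / 2"] c_bounds by auto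
  define k0 where "k0 = c / 2 * sqrt (c / 2) * (2 * c)"
  have k0: "0 < k0" using c_bounds by (simp add: k0_def)
  define T where "T = max Tv (15 * T0 / k0)"
  have "v < c / 2 \<and> 120 * T0 \<le> f v - f u" if t: "T \<le> t" and s: "solution t u v" for t u v
  proof
    have t0: "T0 \<le> t" "15 * T0 \<le> t * k0" using t Tv(1) k0 by (auto simp: T_def field_simps)
    show vc: "v < c / 2" using Tv(2)[OF _ s] t by (simp add: T_def)
    have uv: "0 < v" "v < u" "u < 1" "E t u v = 0" using s by (auto simp: solution_def)
    have "k0 \<le> Ep u v" unfolding k0_def
      using vc uv solution_v_lt_c_lt_u[OF t0(1) s] by (intro Ep_lower) auto
    then have "8 * t * k0 \<le> Eg u v" using uv t0 T0_pos by (simp add: E_def)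
    also have "\<dots> \<le> sqrt (u - v) * (f v - f u)" by (rule Eg_upper[OF uv(1-3)])
    also have "\<dots> \<le> 1 * (f v - f u)"
      using uv f_antimono[of v u] by (intro mult_right_mono) auto
    finally show "120 * T0 \<le> f v - f u" using t0 by simp
  qed
  then show ?thesis using Tv(1) by (intro exI[of _ T]) (auto simp: T_def)
qed

lemma R_upcrossing:
  assumes w: "0 < w" "w < u" "u < 1" "R u w = 0" and gap: "120 * T0 \<le> f w - f u"
  shows "\<exists>l>0. ((\<lambda>w. R u w) has_real_derivative l) (at w)"
proof -
  have "60 * T0 \<le> (f w - f u) / 2" using gap by simp
  also have "\<dots> \<le> (f w - f u) / (2 * (u - w))"
    using w gap T0_pos by (intro divide_left_mono) auto
  also have "\<dots> \<le> A u w" by (rule A_lower[OF w(1-3)])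
  finally have A: "60 * T0 \<le> A u w" .
  have "T0 \<le> A u w / 60" using A by simp
  also have "\<dots> \<le> A u w / (20 * (2 * u + w))" using A w T0_pos by (intro divide_left_mono) auto
  also have "\<dots> = tau u w" using solution_at_tau(2)[OF w] by simp
  finally have "T0 \<le> tau u w" .
  then have "0 < h (tau u w) w" using solution_h_pos solution_at_tau(1)[OF w] by blast
  then have "0 < g w - 3 * w * A u w / (2 * u + w)"
    using w by (simp add: h_def solution_at_tau(2)[OF w] field_simps)
  then show ?thesis using R_has_derivative_v[OF w] w
    by (intro exI[of _ "2 * sqrt (u - w) * (4 * u + w) * (g w - 3 * w * A u w / (2 * u + w))"]) auto
qed

lemma R_neg_below_solution:
  assumes t: "T0 \<le> t" "t < t'" and s: "solution t u v" and s': "solution t' u' v'"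
    and gap: "120 * T0 \<le> f v - f u"
  shows "R u v' < 0"
proof (rule negative_before_upcrossing_zero[of v' v "\<lambda>w. R u w"])
  have v'v: "v' < v" by (rule solution_v_strict_antimono_t[OF t s s'])
  have uv: "0 < v'" "v < u" "u < 1" using s s' by (auto simp: solution_def)
  show "v' \<le> v" "v' < v" "v' \<le> v'" using v'v by auto
  show "continuous_on {v'..v} (\<lambda>w. R u w)" using uv by (intro continuous_on_R_v) auto
  show "R u v = 0" by (rule R_of_solution[OF s])
  show "\<exists>l>0. ((\<lambda>w. R u w) has_real_derivative l) (at w)" if "v' \<le> w" "w \<le> v" "R u w = 0" for w
  proof (rule R_upcrossing)
    show "0 < w" "w < u" "u < 1" "R u w = 0" using that uv by auto
    show "120 * T0 \<le> f w - f u" using gap f_antimono[of w v] that uv by simp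
  qed
qed

lemma tau_interior_max:
  assumes s': "solution t' u' v'" and u: "u' < u" "u < 1" and Eu: "0 \<le> E t' u v'" and R: "R u v' < 0"
  obtains xs where "u' < xs" "xs < u" "R xs v' = 0" "t' < tau xs v'"
proof -
  have v': "0 < v'" "v' < u'" "E t' u' v' = 0" using s' by (auto simp: solution_def)
  have Ep: "0 < Ep x v'" if "v' < x" for x using that v' by (intro Ep_pos)
  have der: "((\<lambda>x. tau x v') has_real_derivative sqrt (x - v') * R x v' / (16 * (Ep x v')\<^sup>2)) (at x)"
    if "u' \<le> x" "x \<le> u" for x using that u v' by (intro tau_has_derivative_x) auto
  have tu': "tau u' v' = t'" using v' Ep[of u'] by (simp add: tau_def E_def field_simps)
  have tu: "t' \<le> tau u v'" using Eu Ep[of u] u v' by (simp add: tau_def E_def field_simps)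
  obtain d where d: "0 < d" "\<And>h. 0 < h \<Longrightarrow> h < d \<Longrightarrow> tau u v' < tau (u - h) v'"
    using DERIV_neg_dec_left[OF der[of u]] R Ep[of u] u v' by (auto simp: divide_neg_pos mult_pos_neg)
  define h where "h = min (d / 2) ((u - u') / 2)"
  have h: "0 < h" "h < d" "h < u - u'" using d(1) u by (auto simp: h_def min_def)
  define y where "y = u - h"
  have y: "u' < y" "y < u" "tau u v' < tau y v'" using d(2)[OF h(1,2)] h by (auto simp: y_def)
  have "continuous_on {u'..u} (\<lambda>x. tau x v')"
    by (intro continuous_at_imp_continuous_on ballI DERIV_isCont[OF der]) auto
  moreover have "{u'..u} \<noteq> {}" using u by simp
  ultimately obtain xs where xs: "xs \<in> {u'..u}" "\<And>x. x \<in> {u'..u} \<Longrightarrow> tau x v' \<le> tau xs v'"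
    using continuous_attains_sup[OF compact_Icc] by blast
  have "tau y v' \<le> tau xs v'" using xs(2) y by simp
  then have "t' < tau xs v'" "tau u v' < tau xs v'" using y(3) tu by linarith+
  then have xsi: "t' < tau xs v'" "u' < xs" "xs < u"
    using xs(1) tu' by (auto simp: order.order_iff_strict)
  have "sqrt (xs - v') * R xs v' / (16 * (Ep xs v')\<^sup>2) = 0"
    using xs xsi by (intro DERIV_local_max[OF der, of xs "min (xs - u') (u - xs)"]) (auto simp: abs_less_iff)
  then have "R xs v' = 0" using xsi v' Ep[of xs] by simp
  then show ?thesis using that xsi by blast
qed

lemma solution_u_strict_mono_t:
  "\<exists>T\<ge>T0. \<forall>t t' u v u' v'. T \<le> t \<longrightarrow> t < t' \<longrightarrow> solution t u v \<longrightarrow> solution t' u' v' \<longrightarrow> u < u'"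
proof -
  obtain T where T: "T0 \<le> T" "\<And>t u v. T \<le> t \<Longrightarrow> solution t u v \<Longrightarrow> v < c / 2 \<and> 120 * T0 \<le> f v - f u"
    using solution_f_gap by blast
  have "u < u'" if t: "T \<le> t" "t < t'" and s: "solution t u v" and s': "solution t' u' v'" for t t' u v u' v'
  proof (rule ccontr)
    assume "\<not> u < u'"
    have t0: "T0 \<le> t" "T0 \<le> t'" using t T(1) by auto
    have R: "R u v' < 0" using R_neg_below_solution[OF t0(1) t(2) s s'] T(2)[OF t(1) s] by blast
    then have "u' < u" using \<open>\<not> u < u'\<close> R_of_solution[OF s'] by (cases "u = u'") auto
    moreover have "0 \<le> E t' u v'"
      using solution_E_pos[OF t0(2) s', of u] \<open>u' < u\<close> s s' by (auto simp: solution_def)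
    ultimately obtain xs where xs: "u' < xs" "xs < u" "R xs v' = 0" "t' < tau xs v'"
      using tau_interior_max[OF s'] s R by (auto simp: solution_def)
    have v': "0 < v'" "v' < u'" "u' < 1" "E t' u' v' = 0" using s' by (auto simp: solution_def)
    have "solution (tau xs v') xs v'" using xs v' s by (intro solution_at_tau) (auto simp: solution_def)
    then have "0 < E (tau xs v') u' v'"
      using solution_E_pos[of "tau xs v'" xs v' u'] xs t0(2) v' by auto
    moreover have "E (tau xs v') u' v' = 8 * Ep u' v' * (t' - tau xs v')" using v' by (simp add: E_def algebra_simps)
    moreover have "0 < Ep u' v'" using v' by (intro Ep_pos)
    ultimately show False using xs(4) by (simp add: mult_pos_neg zero_less_mult_iff)
  qed
  then show ?thesis using T(1) by blast
qed

end

context solution_regime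
begin

lemma Phi0_eq_Phi:
  assumes "0 < x" "x < 1" "0 < v" "v < 1"
  shows "Phi0 f t x v = Phi t x v"
proof -
  have "Hp f t ((1 + \<mu>) / 2 * x + (1 - \<mu>) / 2 * v) = h t ((1 + \<mu>) / 2 * x + (1 - \<mu>) / 2 * v)"
    if "\<mu> \<in> {-1..1}" for \<mu>
  proof -
    have "0 < sqrt ((1 - \<mu>) / 2)" "sqrt ((1 - \<mu>) / 2) \<le> 1" if "\<mu> < 1" using that \<open>\<mu> \<in> {-1..1}\<close> by auto
    then have "0 < (1 + \<mu>) / 2 * x + (1 - \<mu>) / 2 * v" "(1 + \<mu>) / 2 * x + (1 - \<mu>) / 2 * v < 1"
      using that assms interp_in_unit[of x v "sqrt ((1 - \<mu>) / 2)"] interp_sqrt_substitution[of \<mu> x v]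
      by (cases "\<mu> = 1"; force)+
    then show ?thesis using DERIV_imp_deriv[OF f_der] by (simp add: Hp_def h_def)
  qed
  then have "integral {-1..1} (\<lambda>\<mu>. Hp f t ((1 + \<mu>) / 2 * x + (1 - \<mu>) / 2 * v) / sqrt (1 - \<mu>))
      = integral {-1..1} (\<lambda>\<mu>. h t ((1 + \<mu>) / 2 * x + (1 - \<mu>) / 2 * v) / sqrt (1 - \<mu>))"
    by (intro integral_cong) simp
  also have "\<dots> = 2 * sqrt 2 * integral {0..1} (\<lambda>s. h t (interp x v s))"
    by (rule integral_sqrt_substitution[OF continuous_on_h assms])
  finally show ?thesis using Phi_eq_integral_h[OF assms] by (simp add: Phi0_def)
qed

lemma solves_system_iff:
  "solves_system f t u1 u3 x \<longleftrightarrow> solution t u1 u3 \<and> x = 30 * t * u3\<^sup>2 + f u3"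
proof (cases "0 < u3 \<and> u3 < u1 \<and> u1 < 1")
  case True
  then have "Phi0 f t \<xi> u3 * sqrt (\<xi> - u3) = sqrt (\<xi> - u3) * Phi t \<xi> u3" if "\<xi> \<in> {u3..u1}" for \<xi>
    using that Phi0_eq_Phi[of \<xi> u3 t] by auto
  then have "integral {u3..u1} (\<lambda>\<xi>. Phi0 f t \<xi> u3 * sqrt (\<xi> - u3))
      = integral {u3..u1} (\<lambda>\<xi>. sqrt (\<xi> - u3) * Phi t \<xi> u3)"
    by (rule integral_cong)
  also have "\<dots> = E t u1 u3" using E_eq_integral True by blast
  finally have "integral {u3..u1} (\<lambda>\<xi>. Phi0 f t \<xi> u3 * sqrt (\<xi> - u3)) = E t u1 u3" .
  then show ?thesis using True Phi0_eq_Phi[of u1 u3 t] by (auto simp: solves_system_def solution_def)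
qed (auto simp: solves_system_def solution_def)

definition sol_u :: "real \<Rightarrow> real" where "sol_u t = fst (SOME p. solution t (fst p) (snd p))"
definition sol_v :: "real \<Rightarrow> real" where "sol_v t = snd (SOME p. solution t (fst p) (snd p))"

lemma solution_sol_uv: "solution t u v \<Longrightarrow> solution t (sol_u t) (sol_v t)"
  unfolding sol_u_def sol_v_def by (rule someI[of "\<lambda>p. solution t (fst p) (snd p)" "(u, v)"]) simp

lemma tendsto_sol_u:
  assumes "\<And>t. T1 \<le> t \<Longrightarrow> \<exists>u v. solution t u v"
  shows "(sol_u \<longlongrightarrow> 1) at_top"
proof (rule tendstoI)
  fix e :: real assume "0 < e"
  then obtain T where T: "\<And>t u v. T \<le> t \<Longrightarrow> solution t u v \<Longrightarrow> 1 - e < u"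
    using solution_u_near_1 by blast
  have "dist (sol_u t) 1 < e" if "max T T1 \<le> t" for t
  proof -
    have s: "solution t (sol_u t) (sol_v t)" using assms[of t] that solution_sol_uv by auto
    moreover have "1 - e < sol_u t" using T[OF _ s] that by simp
    ultimately show ?thesis by (auto simp: solution_def dist_real_def)
  qed
  then have "\<forall>t\<ge>max T T1. dist (sol_u t) 1 < e" by blast
  then show "\<forall>\<^sub>F t in at_top. dist (sol_u t) 1 < e" unfolding eventually_at_top_linorder by blast
qed

lemma tendsto_sol_v:
  assumes "\<And>t. T1 \<le> t \<Longrightarrow> \<exists>u v. solution t u v"
  shows "(sol_v \<longlongrightarrow> 0) at_top"
proof (rule tendstoI)
  fix e :: real assume "0 < e"
  then obtain T where T: "\<And>t u v. T \<le> t \<Longrightarrow> solution t u v \<Longrightarrow> v < e"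
    using solution_v_small by blast
  have "dist (sol_v t) 0 < e" if "max T T1 \<le> t" for t
  proof -
    have s: "solution t (sol_u t) (sol_v t)" using assms[of t] that solution_sol_uv by auto
    moreover have "sol_v t < e" using T[OF _ s] that by simp
    ultimately show ?thesis by (auto simp: solution_def dist_real_def)
  qed
  then have "\<forall>t\<ge>max T T1. dist (sol_v t) 0 < e" by blast
  then show "\<forall>\<^sub>F t in at_top. dist (sol_v t) 0 < e" unfolding eventually_at_top_linorder by blast
qed

end

context solution_regime
begin

lemma solution_curves:
  assumes "0 < \<delta>" "0 < \<delta>2"
  shows "\<exists>T>0. \<exists>u1p u3p xp :: real \<Rightarrow> real.
           (\<forall>t>T. solves_system f t (u1p t) (u3p t) (xp t) \<and>
                  (\<forall>u1 u3 x. solves_system f t u1 u3 x \<longrightarrow> u1 = u1p t \<and> u3 = u3p t \<and> x = xp t)) \<and>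
           strict_mono_on {T<..} u1p \<and> strict_antimono_on {T<..} u3p \<and>
           (u1p \<longlongrightarrow> 1) at_top \<and> (u3p \<longlongrightarrow> 0) at_top \<and>
           (\<forall>t>T. 1 - \<delta> < u1p t \<and> u1p t < 1 \<and> 0 < u3p t \<and> u3p t < \<delta>2)"
proof -
  obtain T1 where T1: "T0 \<le> T1" "\<And>t. T1 \<le> t \<Longrightarrow> \<exists>u v. solution t u v"
    using solution_exists by blast
  obtain Tm where Tm: "T0 \<le> Tm"
    "\<And>t t' u v u' v'. Tm \<le> t \<Longrightarrow> t < t' \<Longrightarrow> solution t u v \<Longrightarrow> solution t' u' v' \<Longrightarrow> u < u'"
    using solution_u_strict_mono_t by blast
  obtain Tv where Tv: "\<And>t u v. Tv \<le> t \<Longrightarrow> solution t u v \<Longrightarrow> v < \<delta>2"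
    using solution_v_small[OF assms(2)] by blast
  obtain Tu where Tu: "\<And>t u v. Tu \<le> t \<Longrightarrow> solution t u v \<Longrightarrow> 1 - \<delta> < u"
    using solution_u_near_1[OF assms(1)] by blast
  define T where "T = max (max T1 Tm) (max Tv Tu)"
  have "T1 \<le> T" "Tm \<le> T" "Tv \<le> T" "Tu \<le> T" by (auto simp: T_def)
  moreover have "T0 \<le> T" "0 < T" using T0_pos T1(1) \<open>T1 \<le> T\<close> by linarith+
  ultimately have T: "0 < T" "T1 \<le> T" "Tm \<le> T" "Tv \<le> T" "Tu \<le> T" "T0 \<le> T" by simp_all
  have sol: "solution t (sol_u t) (sol_v t)" if "T < t" for t
    using T1(2)[of t] that T solution_sol_uv by force
  have mono: "strict_mono_on {T<..} sol_u"
    using Tm(2)[OF _ _ sol sol] T by (auto simp: monotone_on_def)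
  have antimono: "strict_antimono_on {T<..} sol_v"
    using solution_v_strict_antimono_t[OF _ _ sol sol] T by (auto simp: monotone_on_def)
  have bounds: "\<forall>t>T. 1 - \<delta> < sol_u t \<and> sol_u t < 1 \<and> 0 < sol_v t \<and> sol_v t < \<delta>2"
    using Tu[OF _ sol] Tv[OF _ sol] sol T by (auto simp: solution_def)
  have "solves_system f t u1 u3 x \<longleftrightarrow> u1 = sol_u t \<and> u3 = sol_v t \<and> x = 30 * t * (sol_v t)\<^sup>2 + f (sol_v t)"
    if "T < t" for t u1 u3 x
    using solution_unique[of t u1 u3 "sol_u t" "sol_v t"] sol[OF that] that T
    by (auto simp: solves_system_iff)
  then have unique: "\<forall>t>T. solves_system f t (sol_u t) (sol_v t) (30 * t * (sol_v t)\<^sup>2 + f (sol_v t)) \<and>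
      (\<forall>u1 u3 x. solves_system f t u1 u3 x \<longrightarrow>
        u1 = sol_u t \<and> u3 = sol_v t \<and> x = 30 * t * (sol_v t)\<^sup>2 + f (sol_v t))"
    by blast
  have lim: "(sol_u \<longlongrightarrow> 1) at_top" "(sol_v \<longlongrightarrow> 0) at_top"
    using tendsto_sol_u[OF T1(2)] tendsto_sol_v[OF T1(2)] by simp_all
  show ?thesis
    by (rule exI[of _ T], rule conjI[OF T(1)], rule exI[of _ sol_u], rule exI[of _ sol_v],
        rule exI[of _ "\<lambda>t. 30 * t * (sol_v t)\<^sup>2 + f (sol_v t)"], intro conjI)
       (fact unique mono antimono lim bounds)+
qed

end

lemma smooth_real_on_DERIV:
  "smooth_real_on S g \<Longrightarrow> x \<in> S \<Longrightarrow> ((deriv ^^ n) g has_real_derivative (deriv ^^ Suc n) g x) (at x)"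
  by (simp add: smooth_real_on_def DERIV_deriv_iff_real_differentiable)

lemma inverse_of_decreasing_large_near_0:
  fixes u0 f :: "real \<Rightarrow> real"
  assumes "\<And>x y. x < y \<Longrightarrow> u0 y < u0 x" "\<And>x. 0 < u0 x \<and> u0 x < 1"
    and "\<And>u. 0 < u \<Longrightarrow> u < 1 \<Longrightarrow> u0 (f u) = u"
  shows "\<exists>a>0. \<forall>x. 0 < x \<and> x < a \<longrightarrow> K < f x"
proof (intro exI[of _ "u0 K"] conjI allI impI)
  fix x assume x: "0 < x \<and> x < u0 K"
  then have "u0 (f x) < u0 K" using assms(2)[of K] assms(3)[of x] by auto
  then show "K < f x" using assms(1)[of "f x" K] by (cases "f x \<le> K") (auto simp: order_le_less)
qed (use assms(2) in auto)

lemma inverse_of_decreasing_small_near_1: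
  fixes u0 f :: "real \<Rightarrow> real"
  assumes "\<And>x y. x < y \<Longrightarrow> u0 y < u0 x" "\<And>x. 0 < u0 x \<and> u0 x < 1"
    and "\<And>u. 0 < u \<Longrightarrow> u < 1 \<Longrightarrow> u0 (f u) = u"
  shows "\<exists>b<1. \<forall>x. b < x \<and> x < 1 \<longrightarrow> f x < K"
proof (intro exI[of _ "u0 K"] conjI allI impI)
  fix x assume x: "u0 K < x \<and> x < 1"
  then have "u0 K < u0 (f x)" using assms(2)[of K] assms(3)[of x] by auto
  then show "f x < K" using assms(1)[of K "f x"] by (cases "K \<le> f x") (auto simp: order_le_less)
qed (use assms(2) in auto)

lemma inverse_profile_of_inverse:
  fixes u0 f :: "real \<Rightarrow> real" and \<delta>2 :: real
  assumes u0: "\<And>x y. x < y \<Longrightarrow> u0 y < u0 x" "\<And>x. 0 < u0 x \<and> u0 x < 1"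
    and f_inv: "\<And>u. 0 < u \<Longrightarrow> u < 1 \<Longrightarrow> u0 (f u) = u"
    and f_smooth: "smooth_real_on {0<..<1} f"
    and f'_neg: "\<And>u. 0 < u \<Longrightarrow> u < 1 \<Longrightarrow> deriv f u < 0"
    and f'''_ends: "\<exists>\<epsilon>>0. (\<forall>u. 0 < u \<and> u < \<epsilon> \<longrightarrow> (deriv ^^ 3) f u < 0)
                         \<and> (\<forall>u. 1 - \<epsilon> < u \<and> u < 1 \<longrightarrow> (deriv ^^ 3) f u < 0)"
    and \<delta>2: "\<delta>2 > 0" "\<And>u. 0 < u \<Longrightarrow> u < \<delta>2 \<Longrightarrow> u < 1 \<Longrightarrow> deriv (deriv f) u > 0"
  shows "\<exists>e0 d2. inverse_profile f (\<lambda>x. - deriv f x) (\<lambda>x. - deriv (deriv f) x)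
    (\<lambda>x. - deriv (deriv (deriv f)) x) e0 d2"
proof -
  obtain \<epsilon> where \<epsilon>: "\<epsilon> > 0" "\<And>u. 0 < u \<Longrightarrow> u < \<epsilon> \<Longrightarrow> deriv (deriv (deriv f)) u < 0"
      "\<And>u. 1 - \<epsilon> < u \<Longrightarrow> u < 1 \<Longrightarrow> deriv (deriv (deriv f)) u < 0"
    using f'''_ends by (auto simp: numeral_3_eq_3)
  have D: "((deriv ^^ n) f has_real_derivative (deriv ^^ Suc n) f x) (at x)" if "0 < x" "x < 1" for n x
    using smooth_real_on_DERIV[OF f_smooth] that by simp
  have "inverse_profile f (\<lambda>x. - deriv f x) (\<lambda>x. - deriv (deriv f) x)
      (\<lambda>x. - deriv (deriv (deriv f)) x) (min \<epsilon> (1/4)) (min \<delta>2 (1/2))"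
  proof (unfold_locales, goal_cases)
    case (1 x) then show ?case using D[of x 0] by simp
  next
    case (2 x) then show ?case using DERIV_minus[OF D[of x 1]] by simp
  next
    case (3 x) then show ?case using DERIV_minus[OF D[of x 2]] by (simp add: numeral_2_eq_2)
  next
    case (4 x) then show ?case using DERIV_isCont[OF D[of x 3]] by (simp add: numeral_3_eq_3)
  qed (use \<epsilon> \<delta>2 f'_neg inverse_of_decreasing_large_near_0[of u0 f, OF u0 f_inv]
        inverse_of_decreasing_small_near_1[of u0 f, OF u0 f_inv] in auto)
  then show ?thesis by blast
qed

theorem theorem4p8:
  fixes u0 f :: "real \<Rightarrow> real" and \<delta> \<delta>2 :: real
  assumes u0_smooth: "smooth_real_on UNIV u0"
    and u0_decr: "\<And>x y. x < y \<Longrightarrow> u0 y < u0 x"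
    and u0_range: "\<And>x. 0 < u0 x \<and> u0 x < 1"
    and u0_bot: "(u0 \<longlongrightarrow> 1) at_bot"
    and u0_top: "(u0 \<longlongrightarrow> 0) at_top"
    and f_inv: "\<And>u. 0 < u \<Longrightarrow> u < 1 \<Longrightarrow> u0 (f u) = u"
    and f_smooth: "smooth_real_on {0<..<1} f"
    and f'_neg: "\<And>u. 0 < u \<Longrightarrow> u < 1 \<Longrightarrow> deriv f u < 0"
    and f'''_ends: "\<exists>\<epsilon>>0. (\<forall>u. 0 < u \<and> u < \<epsilon> \<longrightarrow> (deriv ^^ 3) f u < 0)
                         \<and> (\<forall>u. 1 - \<epsilon> < u \<and> u < 1 \<longrightarrow> (deriv ^^ 3) f u < 0)"
    and \<delta>_pos: "\<delta> > 0"
    and \<delta>_prop: "\<And>xi u1. 0 < xi \<Longrightarrow> xi < 1 \<Longrightarrow> 0 < u1 \<Longrightarrow> 1 - \<delta> < u1 \<Longrightarrow> u1 < 1 \<Longrightarrow>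
                   deriv (deriv (\<lambda>\<xi>. F0 f \<xi> u1)) xi < 0"
    and \<delta>2_pos: "\<delta>2 > 0"
    and \<delta>2_prop: "\<And>u. 0 < u \<Longrightarrow> u < \<delta>2 \<Longrightarrow> u < 1 \<Longrightarrow> deriv (deriv f) u > 0"
  shows "\<exists>T>0. \<exists>u1p u3p xp :: real \<Rightarrow> real.
           (\<forall>t>T. solves_system f t (u1p t) (u3p t) (xp t) \<and>
                  (\<forall>u1 u3 x. solves_system f t u1 u3 x \<longrightarrow>
                              u1 = u1p t \<and> u3 = u3p t \<and> x = xp t)) \<and>
           strict_mono_on {T<..} u1p \<and>
           strict_antimono_on {T<..} u3p \<and>
           (u1p \<longlongrightarrow> 1) at_top \<and>
           (u3p \<longlongrightarrow> 0) at_top \<and>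
           (\<forall>t>T. 1 - \<delta> < u1p t \<and> u1p t < 1 \<and> 0 < u3p t \<and> u3p t < \<delta>2)"
proof -
  define g where "g = (\<lambda>x. - deriv f x)"
  define g1 where "g1 = (\<lambda>x. - deriv (deriv f) x)"
  define g2 where "g2 = (\<lambda>x. - deriv (deriv (deriv f)) x)"
  obtain e0 d2 where "inverse_profile f g g1 g2 e0 d2"
    using inverse_profile_of_inverse[OF u0_decr u0_range f_inv f_smooth f'_neg f'''_ends \<delta>2_pos \<delta>2_prop]
    unfolding g_def g1_def g2_def by blast
  then interpret P: inverse_profile f g g1 g2 e0 d2 .
  obtain c where c: "1 - e0 / 2 \<le> c" "c < 1" "\<And>x v. c \<le> x \<Longrightarrow> x < 1 \<Longrightarrow> 0 < v \<Longrightarrow> v \<le> x \<Longrightarrow> 0 < P.Axx x v"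
    using P.Axx_pos_near_1 by blast
  obtain T0 where T0: "0 < T0" "\<And>t. T0 \<le> t \<Longrightarrow> (\<forall>p. 0 < p \<longrightarrow> p \<le> c \<longrightarrow> g1 p < 60 * t) \<and> g c < 60 * t * c"
    using P.large_t_threshold[of c] c P.e0 by auto
  interpret S: solution_regime f g g1 g2 e0 d2 c T0
    by unfold_locales (use c T0 in blast)+
  show ?thesis by (rule S.solution_curves[OF \<delta>_pos \<delta>2_pos])
qed

end
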